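(* Let $n\geqslant 1$, let $\mathcal{H}_1,\ldots,\mathcal{H}_n,\mathcal{H}$ be complex Hilbert spaces, and for $k=1,\ldots,n$ let $A_k:\mathcal{H}_k\to\mathcal{H}$ be a bounded linear operator with closed range $Ran(A_k)$. Suppose that positive reals $\gamma_1,\ldots,\gamma_n$ and reals $\varepsilon_{i,j}$ ($i\neq j$) with $\varepsilon_{i,j}=\varepsilon_{j,i}$ satisfy (1) $\gamma_e(A_k)\geqslant\gamma_k>0$ for $k=1,\ldots,n$; (2) $\|A_i^*A_j\|_e\leqslant\varepsilon_{i,j}$ for all $i\neq j$. Define the real symmetric $n\times n$ matrix $M=(m_{i,j})$ by $m_{i,i}=\gamma_i^2$ and $m_{i,j}=-\varepsilon_{i,j}$ for $i\neq j$. If $M$ is positive definite, then the subspaces $Ran(A_1),\ldots,Ran(A_n)$ are essentially linearly independent and their sum $\sum_{k=1}^n Ran(A_k)=\{\sum_{k=1}^n A_kx_k\mid x_k\in\mathcal{H}_k\}$ is closed in $\mathcal{H}$.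
   Context: For a bounded linear operator $T:\mathcal{X}\to\mathcal{Y}$ between Hilbert spaces, $\|T\|_e=\inf\{\|T+K\|\mid K:\mathcal{X}\to\mathcal{Y}\text{ compact}\}$ is the essential norm. Essential reduced minimum modulus: for a bounded linear operator $A:\mathcal{H}_1\to\mathcal{H}_2$ with $A\neq 0$, let $B=A^*A\upharpoonright_{\mathcal{H}_1\ominus Ker(A)}$, viewed as a self-adjoint operator on $\mathcal{H}_1\ominus Ker(A)$; then $\gamma_e(A)$ is the supremum of all $\gamma\geqslant 0$ for which there exists a compact self-adjoint operator $K$ on $\mathcal{H}_1\ominus Ker(A)$ with $B+K\geqslant\gamma^2 I$ (so $\gamma_e(A)=+\infty$ if $\mathcal{H}_1\ominus Ker(A)$ is finite dimensional); for the zero operator, $\gamma_e(0)=+\infty$. Subspaces $\mathcal{X}_1,\ldots,\mathcal{X}_n$ of a Hilbert space $\mathcal{X}$ are called essentially linearly independent if the linear set $\mathcal{X}_i\cap\sum_{j\neq i}\mathcal{X}_j$ is finite dimensional for every $i=1,\ldots,n$. *)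

theory Defs
  imports "HOL-Analysis.Analysis"
begin

class scaleC = scaleR +
  fixes scaleC :: "complex \<Rightarrow> 'a \<Rightarrow> 'a" (infixr "*\<^sub>C" 75)
  assumes scaleR_scaleC: "scaleR r = scaleC (complex_of_real r)"

class complex_vector = scaleC + ab_group_add +
  assumes scaleC_add_right: "a *\<^sub>C (x + y) = a *\<^sub>C x + a *\<^sub>C y"
    and scaleC_add_left: "(a + b) *\<^sub>C x = a *\<^sub>C x + b *\<^sub>C x"
    and scaleC_scaleC: "a *\<^sub>C (b *\<^sub>C x) = (a * b) *\<^sub>C x"
    and scaleC_one: "1 *\<^sub>C x = x"

class complex_normed_vector = complex_vector + real_normed_vector +
  assumes norm_scaleC: "norm (a *\<^sub>C x) = cmod a * norm x"

class complex_inner = complex_normed_vector +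
  fixes cinner :: "'a \<Rightarrow> 'a \<Rightarrow> complex"
  assumes cinner_commute: "cinner x y = cnj (cinner y x)"
    and cinner_add_left: "cinner (x + y) z = cinner x z + cinner y z"
    and cinner_scaleC_left: "cinner (r *\<^sub>C x) y = cnj r * cinner x y"
    and cinner_real: "Im (cinner x x) = 0"
    and cinner_ge_zero: "0 \<le> Re (cinner x x)"
    and cinner_eq_zero_iff: "cinner x x = 0 \<longleftrightarrow> x = 0"
    and norm_eq_sqrt_cinner: "norm x = sqrt (Re (cinner x x))"

class chilbert_space = complex_inner + complete_space

definition csubspace :: "'a::complex_vector set \<Rightarrow> bool" where
  "csubspace S \<longleftrightarrow> 0 \<in> S \<and> (\<forall>x\<in>S. \<forall>y\<in>S. x + y \<in> S) \<and> (\<forall>c. \<forall>x\<in>S. c *\<^sub>C x \<in> S)"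

definition closed_csubspace :: "'a::complex_normed_vector set \<Rightarrow> bool" where
  "closed_csubspace S \<longleftrightarrow> csubspace S \<and> closed S"

definition cspan_fin :: "'a::complex_vector set \<Rightarrow> 'a set" where
  "cspan_fin F = {(\<Sum>v\<in>F. c v *\<^sub>C v) | c. True}"

definition finite_dim :: "'a::complex_vector set \<Rightarrow> bool" where
  "finite_dim S \<longleftrightarrow> (\<exists>F. finite F \<and> S \<subseteq> cspan_fin F)"

definition bounded_clinear_on :: "'a::complex_normed_vector set \<Rightarrow> 'b::complex_normed_vector set \<Rightarrow> ('a \<Rightarrow> 'b) \<Rightarrow> bool" where
  "bounded_clinear_on X Y T \<longleftrightarrow>
     T ` X \<subseteq> Y \<and>
     (\<forall>x\<in>X. \<forall>y\<in>X. T (x + y) = T x + T y) \<and>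
     (\<forall>c. \<forall>x\<in>X. T (c *\<^sub>C x) = c *\<^sub>C T x) \<and>
     (\<exists>K. \<forall>x\<in>X. norm (T x) \<le> norm x * K)"

definition op_norm_on :: "'a::complex_normed_vector set \<Rightarrow> ('a \<Rightarrow> 'b::complex_normed_vector) \<Rightarrow> real" where
  "op_norm_on X T = Sup {norm (T x) | x. x \<in> X \<and> norm x \<le> 1}"

definition compact_op_on :: "'a::complex_normed_vector set \<Rightarrow> 'b::complex_normed_vector set \<Rightarrow> ('a \<Rightarrow> 'b) \<Rightarrow> bool" where
  "compact_op_on X Y K \<longleftrightarrow> bounded_clinear_on X Y K \<and> compact (closure (K ` (X \<inter> cball 0 1)))"

definition ess_norm :: "'a::complex_normed_vector set \<Rightarrow> 'b::complex_normed_vector set \<Rightarrow> ('a \<Rightarrow> 'b) \<Rightarrow> real" where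
  "ess_norm X Y T = Inf {op_norm_on X (\<lambda>x. T x + K x) | K. compact_op_on X Y K}"

definition adj_on :: "'a::complex_inner set \<Rightarrow> ('a \<Rightarrow> 'b::complex_inner) \<Rightarrow> 'b \<Rightarrow> 'a" where
  "adj_on X A y = (THE z. z \<in> X \<and> (\<forall>x\<in>X. cinner (A x) y = cinner x z))"

definition ker_on :: "'a set \<Rightarrow> ('a \<Rightarrow> 'b::zero) \<Rightarrow> 'a set" where
  "ker_on X A = {x\<in>X. A x = 0}"

definition orth_diff :: "'a::complex_inner set \<Rightarrow> 'a set \<Rightarrow> 'a set" where
  "orth_diff X S = {x\<in>X. \<forall>s\<in>S. cinner s x = 0}"

definition selfadjoint_on :: "'a::complex_inner set \<Rightarrow> ('a \<Rightarrow> 'a) \<Rightarrow> bool" where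
  "selfadjoint_on D K \<longleftrightarrow> (\<forall>x\<in>D. \<forall>y\<in>D. cinner (K x) y = cinner x (K y))"

text \<open>Essential reduced minimum modulus of \<open>A : X \<rightarrow> Y\<close>.
  \<open>B = A\<^sup>*A\<close> restricted to \<open>D = X \<ominus> Ker A\<close>; \<open>B + K \<ge> \<gamma>\<^sup>2 I\<close> means
  \<open>\<langle>(B+K)x, x\<rangle> \<ge> \<gamma>\<^sup>2 \<langle>x,x\<rangle>\<close> for all \<open>x \<in> D\<close>.\<close>
definition ess_red_min_mod :: "'a::complex_inner set \<Rightarrow> ('a \<Rightarrow> 'b::complex_inner) \<Rightarrow> ereal" where
  "ess_red_min_mod X A =
    (if (\<forall>x\<in>X. A x = 0) then \<infinity>
     else (let D = orth_diff X (ker_on X A);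
               B = (\<lambda>x. adj_on X A (A x))
           in Sup {ereal g | g. g \<ge> 0 \<and>
                  (\<exists>K. compact_op_on D D K \<and> selfadjoint_on D K \<and>
                       (\<forall>x\<in>D. Re (cinner (B x + K x) x) \<ge> g\<^sup>2 * (norm x)\<^sup>2))}))"

definition pos_def_mat :: "nat \<Rightarrow> (nat \<Rightarrow> nat \<Rightarrow> real) \<Rightarrow> bool" where
  "pos_def_mat n M \<longleftrightarrow>
     (\<forall>i\<in>{1..n}. \<forall>j\<in>{1..n}. M i j = M j i) \<and>
     (\<forall>v. (\<exists>i\<in>{1..n}. v i \<noteq> 0) \<longrightarrow> (\<Sum>i\<in>{1..n}. \<Sum>j\<in>{1..n}. v i * M i j * v j) > 0)"

definition ess_lin_indep :: "nat \<Rightarrow> (nat \<Rightarrow> 'a::complex_vector set) \<Rightarrow> bool" where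
  "ess_lin_indep n R \<longleftrightarrow>
     (\<forall>i\<in>{1..n}. finite_dim (R i \<inter> {(\<Sum>j\<in>{1..n}-{i}. y j) | y. \<forall>j\<in>{1..n}-{i}. y j \<in> R j}))"

end

theory Submission
  imports Defs
begin

text \<open>
  Replacing each \<open>\<H>\<^sub>k\<close> by \<open>D\<^sub>k = \<H>\<^sub>k \<ominus> Ker A\<^sub>k\<close> does not change the ranges. On the direct sum
  of the \<open>D\<^sub>k\<close> the two hypotheses combine into a lower bound
  \<open>\<parallel>\<Sum>\<^sub>k A\<^sub>k x\<^sub>k\<parallel>\<^sup>2 \<ge> c \<Sum>\<^sub>k \<parallel>x\<^sub>k\<parallel>\<^sup>2 - \<Sum>\<^sub>i\<^sub>,\<^sub>j Re \<langle>x\<^sub>i, K\<^sub>i\<^sub>j x\<^sub>j\<rangle>\<close> with compact \<open>K\<^sub>i\<^sub>j\<close>: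
  the diagonal terms come from \<open>\<gamma>\<^sub>e(A\<^sub>k) \<ge> \<gamma>\<^sub>k\<close>, the off-diagonal ones from
  \<open>\<parallel>A\<^sub>i\<^sup>*A\<^sub>j\<parallel>\<^sub>e \<le> \<epsilon>\<^sub>i\<^sub>j\<close>, and positive definiteness of \<open>M\<close>, which survives a small perturbation
  of its entries, turns the sum of the scalar parts into \<open>c \<Sum>\<^sub>k \<parallel>x\<^sub>k\<parallel>\<^sup>2\<close>.

  An operator \<open>T x = \<Sum>\<^sub>k A\<^sub>k x\<^sub>k\<close> that is bounded below modulo compact operators has a
  finite-dimensional kernel, because on a suitable subsequence of an infinite orthonormal family
  in the kernel all the compact terms converge and the lower bound forces the family to be
  Cauchy. By the same compactness argument \<open>T\<close> is bounded below on the orthogonal complement of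
  its kernel, so its range \<open>\<Sum>\<^sub>k Ran A\<^sub>k\<close> is closed. Finally every vector of
  \<open>Ran A\<^sub>i \<inter> \<Sum>\<^sub>j\<^sub>\<noteq>\<^sub>i Ran A\<^sub>j\<close> is \<open>A\<^sub>i x\<^sub>i\<close> for some \<open>x\<close> in the kernel of \<open>T\<close>, which gives the essential
  linear independence.
\<close>

lemma cinner_add_right: "cinner x (y + z) = cinner x y + cinner x z"
  by (metis cinner_add_left cinner_commute complex_cnj_add)

lemma cinner_scaleC_right: "cinner x (r *\<^sub>C y) = r * cinner x y"
  by (metis cinner_commute cinner_scaleC_left complex_cnj_cnj complex_cnj_mult)

lemma cinner_zero_left [simp]: "cinner 0 y = 0"
  using cinner_add_left[of 0 0 y] by simp

lemma cinner_zero_right [simp]: "cinner x 0 = 0"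
  using cinner_add_right[of x 0 0] by simp

lemma cinner_minus_left: "cinner (- x) y = - cinner x y"
  using cinner_add_left[of x "-x" y] by (simp add: eq_neg_iff_add_eq_0 add.commute)

lemma cinner_minus_right: "cinner x (- y) = - cinner x y"
  using cinner_add_right[of x y "-y"] by (simp add: eq_neg_iff_add_eq_0 add.commute)

lemma cinner_diff_left: "cinner (x - y) z = cinner x z - cinner y z"
  using cinner_add_left[of x "-y" z] cinner_minus_left[of y z] by simp

lemma cinner_diff_right: "cinner x (y - z) = cinner x y - cinner x z"
  using cinner_add_right[of x y "-z"] cinner_minus_right[of x z] by simp

lemma cinner_sum_left: "cinner (\<Sum>i\<in>A. f i) y = (\<Sum>i\<in>A. cinner (f i) y)"
  by (induction A rule: infinite_finite_induct) (auto simp: cinner_add_left)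

lemma cinner_sum_right: "cinner x (\<Sum>i\<in>A. f i) = (\<Sum>i\<in>A. cinner x (f i))"
  by (induction A rule: infinite_finite_induct) (auto simp: cinner_add_right)

lemma scaleR_eq_scaleC: "r *\<^sub>R x = complex_of_real r *\<^sub>C x"
  by (simp add: scaleR_scaleC)

lemma power2_norm_eq_cinner: "(norm x)\<^sup>2 = Re (cinner x x)"
  by (simp add: norm_eq_sqrt_cinner cinner_ge_zero)

lemma cinner_self_eq_power2_norm: "cinner x x = complex_of_real ((norm x)\<^sup>2)"
  by (simp add: power2_norm_eq_cinner complex_eq_iff cinner_real)

lemma Re_cinner_commute: "Re (cinner x y) = Re (cinner y x)"
  by (subst cinner_commute) simp

lemma power2_norm_add: "(norm (x + y))\<^sup>2 = (norm x)\<^sup>2 + (norm y)\<^sup>2 + 2 * Re (cinner x y)"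
  unfolding power2_norm_eq_cinner
  by (simp add: cinner_add_left cinner_add_right Re_cinner_commute[of y x])

lemma power2_norm_diff: "(norm (x - y))\<^sup>2 = (norm x)\<^sup>2 + (norm y)\<^sup>2 - 2 * Re (cinner x y)"
  unfolding power2_norm_eq_cinner
  by (simp add: cinner_diff_left cinner_diff_right Re_cinner_commute[of y x])

lemma parallelogram_law:
  "(norm (a - b))\<^sup>2 + (norm (a + b))\<^sup>2 = 2 * (norm a)\<^sup>2 + 2 * (norm b)\<^sup>2"
  for a b :: "'a::complex_inner"
  by (simp add: power2_norm_add power2_norm_diff)

lemma power2_norm_sum:
  "(norm (\<Sum>k\<in>I. v k))\<^sup>2 = (\<Sum>i\<in>I. \<Sum>j\<in>I. Re (cinner (v i) (v j)))"
  for v :: "'i \<Rightarrow> 'a::complex_inner"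
proof -
  have "(norm (\<Sum>k\<in>I. v k))\<^sup>2 = (\<Sum>j\<in>I. \<Sum>i\<in>I. Re (cinner (v i) (v j)))"
    by (simp add: power2_norm_eq_cinner cinner_sum_left cinner_sum_right)
  also have "\<dots> = (\<Sum>i\<in>I. \<Sum>j\<in>I. Re (cinner (v i) (v j)))"
    by (rule sum.swap)
  finally show ?thesis .
qed

lemma cmod_cinner_le: "cmod (cinner x y) \<le> norm x * norm y"
proof (cases "y = 0")
  case False
  define c where "c = cinner y x"
  define s where "s = (norm y)\<^sup>2"
  have s: "s > 0"
    using False by (simp add: s_def)
  define z where "z = x - (c / s) *\<^sub>C y"
  have yz: "cinner y z = 0"
    using s by (simp add: z_def cinner_diff_right cinner_scaleC_right cinner_self_eq_power2_norm c_def s_def)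
  hence zy: "cinner z y = 0"
    by (metis cinner_commute complex_cnj_zero)
  have "x = z + (c / s) *\<^sub>C y"
    by (simp add: z_def)
  hence "cinner x x = cinner z z + cnj (c / s) * (c / s) * cinner y y"
    by (simp add: cinner_add_left cinner_add_right cinner_scaleC_left cinner_scaleC_right yz zy
        algebra_simps)
  also have "cnj (c / s) * (c / s) * cinner y y = complex_of_real ((cmod c)\<^sup>2 / s)"
  proof -
    have "cnj c * c = complex_of_real (cmod c) * complex_of_real (cmod c)"
      by (metis complex_norm_square mult.commute of_real_power power2_eq_square)
    moreover have "cinner y y = complex_of_real s"
      by (simp add: cinner_self_eq_power2_norm s_def)
    ultimately show ?thesis
      using s by (simp add: power2_eq_square)
  qed
  finally have "(norm x)\<^sup>2 = (norm z)\<^sup>2 + (cmod c)\<^sup>2 / s"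
    unfolding cinner_self_eq_power2_norm of_real_add[symmetric] of_real_eq_iff .
  hence "(cmod c)\<^sup>2 \<le> (norm x * norm y)\<^sup>2"
    using s by (simp add: s_def field_simps)
  hence "cmod c \<le> norm x * norm y"
    by (meson norm_ge_zero power2_le_imp_le zero_le_mult_iff)
  thus ?thesis
    by (metis c_def cinner_commute complex_mod_cnj)
qed simp

lemma tendsto_cinner_right:
  assumes "s \<longlonglongrightarrow> x"
  shows "(\<lambda>m. cinner a (s m)) \<longlonglongrightarrow> cinner a x"
proof -
  have lim: "(\<lambda>m. norm a * norm (s m - x)) \<longlonglongrightarrow> 0"
    using tendsto_mult_right_zero[OF tendsto_norm_zero[OF LIM_zero[OF assms]]] .
  have "\<forall>m. norm (cinner a (s m) - cinner a x) \<le> norm a * norm (s m - x)"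
    by (metis cmod_cinner_le cinner_diff_right)
  from Lim_null_comparison[OF always_eventually[OF this] lim] show ?thesis
    by (rule LIM_zero_cancel)
qed

instantiation complex :: chilbert_space
begin

definition scaleC_complex :: "complex \<Rightarrow> complex \<Rightarrow> complex"
  where "scaleC_complex = (*)"

definition cinner_complex :: "complex \<Rightarrow> complex \<Rightarrow> complex"
  where "cinner_complex x y = cnj x * y"

instance
proof
  fix r :: real and a x :: complex
  show "((*\<^sub>R) r :: complex \<Rightarrow> complex) = (*\<^sub>C) (complex_of_real r)"
    by (auto simp: scaleC_complex_def scaleR_conv_of_real)
  show "norm (a *\<^sub>C x) = cmod a * norm x"
    by (simp add: scaleC_complex_def norm_mult)
  show "norm x = sqrt (Re (cinner x x))"
    by (simp add: cinner_complex_def mult.commute[of "cnj x"] flip: complex_norm_square)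
qed (auto simp: scaleC_complex_def cinner_complex_def algebra_simps)

end

lemma csubspace_0: "csubspace S \<Longrightarrow> 0 \<in> S"
  by (simp add: csubspace_def)

lemma csubspace_add: "csubspace S \<Longrightarrow> x \<in> S \<Longrightarrow> y \<in> S \<Longrightarrow> x + y \<in> S"
  by (simp add: csubspace_def)

lemma csubspace_scaleC: "csubspace S \<Longrightarrow> x \<in> S \<Longrightarrow> c *\<^sub>C x \<in> S"
  by (simp add: csubspace_def)

lemma scaleC_zero_left [simp]: "(0::complex) *\<^sub>C (x::'a::complex_vector) = 0"
proof -
  have "(0::complex) *\<^sub>C x = 0 *\<^sub>C x + 0 *\<^sub>C x"
    by (simp flip: scaleC_add_left)
  thus ?thesis
    by simp
qed

lemma scaleC_zero_right [simp]: "c *\<^sub>C (0::'a::complex_vector) = 0"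
proof -
  have "c *\<^sub>C (0::'a) = c *\<^sub>C 0 + c *\<^sub>C 0"
    by (simp flip: scaleC_add_right)
  thus ?thesis
    by simp
qed

lemma scaleC_minus_one: "(-1::complex) *\<^sub>C (x::'a::complex_vector) = - x"
proof -
  have "x + (-1::complex) *\<^sub>C x = (1 + (-1::complex)) *\<^sub>C x"
    by (simp only: scaleC_add_left scaleC_one)
  thus ?thesis
    by (simp add: eq_neg_iff_add_eq_0 add.commute)
qed

lemma scaleC_sum_right: "a *\<^sub>C (\<Sum>i\<in>S. f i) = (\<Sum>i\<in>S. a *\<^sub>C f i)"
  for f :: "_ \<Rightarrow> 'a::complex_vector"
  by (induction S rule: infinite_finite_induct) (auto simp: scaleC_add_right)

lemma csubspace_minus: "csubspace S \<Longrightarrow> x \<in> S \<Longrightarrow> - x \<in> S"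
  using csubspace_scaleC[of S x "-1"] by (simp add: scaleC_minus_one)

lemma csubspace_diff: "csubspace S \<Longrightarrow> x \<in> S \<Longrightarrow> y \<in> S \<Longrightarrow> x - y \<in> S"
  using csubspace_add[of S x "-y"] csubspace_minus[of S y] by simp

lemma csubspace_scaleR: "csubspace S \<Longrightarrow> x \<in> S \<Longrightarrow> r *\<^sub>R x \<in> S"
  by (simp add: csubspace_scaleC scaleR_eq_scaleC)

lemma csubspace_sum: "csubspace S \<Longrightarrow> (\<And>i. i \<in> I \<Longrightarrow> f i \<in> S) \<Longrightarrow> (\<Sum>i\<in>I. f i) \<in> S"
  by (induction I rule: infinite_finite_induct) (auto simp: csubspace_0 csubspace_add)

lemma closed_csubspace_csubspace: "closed_csubspace S \<Longrightarrow> csubspace S"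
  by (simp add: closed_csubspace_def)

lemma closed_csubspace_closed: "closed_csubspace S \<Longrightarrow> closed S"
  by (simp add: closed_csubspace_def)

lemma bounded_clinear_on_add:
  "bounded_clinear_on X Y T \<Longrightarrow> x \<in> X \<Longrightarrow> y \<in> X \<Longrightarrow> T (x + y) = T x + T y"
  by (simp add: bounded_clinear_on_def)

lemma bounded_clinear_on_scaleC:
  "bounded_clinear_on X Y T \<Longrightarrow> x \<in> X \<Longrightarrow> T (c *\<^sub>C x) = c *\<^sub>C T x"
  by (simp add: bounded_clinear_on_def)

lemma bounded_clinear_on_scaleR:
  "bounded_clinear_on X Y T \<Longrightarrow> x \<in> X \<Longrightarrow> T (r *\<^sub>R x) = r *\<^sub>R T x"
  by (simp add: scaleR_eq_scaleC bounded_clinear_on_scaleC)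

lemma bounded_clinear_on_0: "bounded_clinear_on X Y T \<Longrightarrow> csubspace X \<Longrightarrow> T 0 = 0"
  using bounded_clinear_on_scaleC[of X Y T 0 0] csubspace_0[of X] by simp

lemma bounded_clinear_on_minus: "bounded_clinear_on X Y T \<Longrightarrow> x \<in> X \<Longrightarrow> T (- x) = - T x"
  using bounded_clinear_on_scaleC[of X Y T x "-1"] by (simp add: scaleC_minus_one)

lemma bounded_clinear_on_diff:
  "bounded_clinear_on X Y T \<Longrightarrow> csubspace X \<Longrightarrow> x \<in> X \<Longrightarrow> y \<in> X \<Longrightarrow> T (x - y) = T x - T y"
  using bounded_clinear_on_add[of X Y T x "-y"] bounded_clinear_on_minus[of X Y T y]
    csubspace_minus[of X y] by simp

lemma bounded_clinear_on_sum:
  assumes "bounded_clinear_on X Y T" "csubspace X" "\<And>i. i \<in> I \<Longrightarrow> f i \<in> X"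
  shows "T (\<Sum>i\<in>I. f i) = (\<Sum>i\<in>I. T (f i))"
  using assms(3)
  by (induction I rule: infinite_finite_induct)
    (auto simp: bounded_clinear_on_0[OF assms(1,2)] bounded_clinear_on_add[OF assms(1)]
      csubspace_sum[OF assms(2)])

lemma bounded_clinear_on_bound:
  assumes "bounded_clinear_on X Y T"
  obtains K where "K \<ge> 0" "\<And>x. x \<in> X \<Longrightarrow> norm (T x) \<le> norm x * K"
proof -
  obtain K where K: "\<forall>x\<in>X. norm (T x) \<le> norm x * K"
    using assms by (auto simp: bounded_clinear_on_def)
  have "norm (T x) \<le> norm x * max K 0" if "x \<in> X" for x
    using K that mult_left_mono[of K "max K 0" "norm x"] by force
  thus thesis
    using that[of "max K 0"] by auto
qed

lemma bounded_clinear_on_subset: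
  assumes "bounded_clinear_on X Y T" "S \<subseteq> X"
  shows "bounded_clinear_on S UNIV T"
proof -
  obtain K where "\<forall>x\<in>X. norm (T x) \<le> norm x * K"
    using assms(1) by (auto simp: bounded_clinear_on_def)
  thus ?thesis
    using assms unfolding bounded_clinear_on_def by (auto simp: subset_eq intro!: exI[of _ K])
qed

lemma bounded_clinear_on_tendsto:
  assumes T: "bounded_clinear_on X Y T" and X: "csubspace X"
    and s: "\<And>m. s m \<in> X" "x \<in> X" "s \<longlonglongrightarrow> x"
  shows "(\<lambda>m. T (s m)) \<longlonglongrightarrow> T x"
proof -
  obtain K where K: "\<And>x. x \<in> X \<Longrightarrow> norm (T x) \<le> norm x * K"
    using bounded_clinear_on_bound[OF T] by blast
  have lim: "(\<lambda>m. norm (s m - x) * K) \<longlonglongrightarrow> 0"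
    using tendsto_mult_left_zero[OF tendsto_norm_zero[OF LIM_zero[OF s(3)]]] .
  have "norm (T (s m) - T x) \<le> norm (s m - x) * K" for m
    using K[OF csubspace_diff[OF X s(1,2)]] bounded_clinear_on_diff[OF T X s(1,2)] by simp
  hence "\<forall>m. norm (T (s m) - T x) \<le> norm (s m - x) * K" ..
  from Lim_null_comparison[OF always_eventually[OF this] lim] show ?thesis
    by (rule LIM_zero_cancel)
qed

lemma closed_csubspace_zero_set:
  assumes X: "closed_csubspace X" and T: "bounded_clinear_on X Y T"
  shows "closed_csubspace {x\<in>X. T x = 0}"
proof -
  have Xs: "csubspace X"
    using closed_csubspace_csubspace[OF X] .
  have "csubspace {x\<in>X. T x = 0}"
    unfolding csubspace_def
    by (simp add: csubspace_0[OF Xs] csubspace_add[OF Xs] csubspace_scaleC[OF Xs]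
        bounded_clinear_on_0[OF T Xs] bounded_clinear_on_add[OF T] bounded_clinear_on_scaleC[OF T])
  moreover have "closed {x\<in>X. T x = 0}"
    unfolding closed_sequential_limits
  proof (intro allI impI, elim conjE)
    fix s l
    assume "\<forall>m. s m \<in> {x\<in>X. T x = 0}" and l: "s \<longlonglongrightarrow> l"
    hence s: "\<And>m. s m \<in> X" "\<And>m. T (s m) = 0"
      by auto
    have lX: "l \<in> X"
      using closed_sequentially[OF closed_csubspace_closed[OF X] s(1) l] .
    have "(\<lambda>m. T (s m)) \<longlonglongrightarrow> T l"
      by (rule bounded_clinear_on_tendsto[OF T Xs s(1) lX l])
    hence "T l = 0"
      by (simp add: s(2) LIMSEQ_const_iff)
    thus "l \<in> {x\<in>X. T x = 0}"
      using lX by simp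
  qed
  ultimately show ?thesis
    by (simp add: closed_csubspace_def)
qed

lemma scaleC_complex_eq_mult [simp]: "c *\<^sub>C z = c * (z::complex)"
  by (simp add: scaleC_complex_def)

lemma tendsto_norm_zero_if_power2_bounded:
  fixes f :: "'c \<Rightarrow> 'a::real_normed_vector"
  assumes "\<And>x. (norm (f x))\<^sup>2 \<le> h x" and "(h \<longlongrightarrow> 0) F"
  shows "((\<lambda>x. norm (f x)) \<longlongrightarrow> 0) F"
proof -
  have "\<forall>x. 0 \<le> (norm (f x))\<^sup>2" "\<forall>x. (norm (f x))\<^sup>2 \<le> h x"
    using assms(1) by simp_all
  from tendsto_sandwich[OF always_eventually always_eventually tendsto_const assms(2), OF this]
  have "((\<lambda>x. (norm (f x))\<^sup>2) \<longlongrightarrow> 0) F" .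
  from tendsto_real_sqrt[OF this] show ?thesis
    by simp
qed

lemma Cauchy_if_diff_tendsto_prod:
  fixes a :: "nat \<Rightarrow> 'a::real_normed_vector"
  assumes "((\<lambda>mp. norm (a (fst mp) - a (snd mp))) \<longlongrightarrow> 0) (sequentially \<times>\<^sub>F sequentially)"
  shows "Cauchy a"
proof (rule metric_CauchyI)
  fix e :: real
  assume "e > 0"
  from order_tendstoD(2)[OF assms this]
  obtain N where "\<forall>m\<ge>N. \<forall>p\<ge>N. norm (a m - a p) < e"
    unfolding eventually_prod_sequentially by auto
  thus "\<exists>M. \<forall>m\<ge>M. \<forall>n\<ge>M. dist (a m) (a n) < e"
    by (auto simp: dist_norm)
qed

lemma convergent_diff_tendsto_prod:
  fixes a :: "nat \<Rightarrow> 'a::real_normed_vector"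
  assumes "convergent a"
  shows "((\<lambda>mp. a (fst mp) - a (snd mp)) \<longlongrightarrow> 0) (sequentially \<times>\<^sub>F sequentially)"
proof -
  obtain l where l: "a \<longlonglongrightarrow> l"
    using assms convergent_def by blast
  show ?thesis
    using tendsto_diff[OF filterlim_compose[OF l filterlim_fst] filterlim_compose[OF l filterlim_snd]]
    by simp
qed

lemma finite_convergent_subseq:
  fixes f :: "'p \<Rightarrow> nat \<Rightarrow> 'a::topological_space"
  assumes "finite P"
    and "\<And>p (r::nat \<Rightarrow> nat). p \<in> P \<Longrightarrow> strict_mono r \<Longrightarrow>
      \<exists>r'::nat \<Rightarrow> nat. strict_mono r' \<and> convergent (\<lambda>m. f p (r (r' m)))"
  shows "\<exists>r::nat \<Rightarrow> nat. strict_mono r \<and> (\<forall>p\<in>P. convergent (\<lambda>m. f p (r m)))"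
  using assms
proof (induction P rule: finite_induct)
  case empty
  show ?case
    by (intro exI[of _ "\<lambda>m. m"]) (simp add: strict_mono_def)
next
  case (insert p P)
  then obtain r where r: "strict_mono r" "\<forall>q\<in>P. convergent (\<lambda>m. f q (r m))"
    by blast
  obtain r' where r': "strict_mono r'" "convergent (\<lambda>m. f p (r (r' m)))"
    using insert.prems[OF insertI1 r(1)] by blast
  have "convergent (\<lambda>m. f q (r (r' m)))" if "q \<in> P" for q
    using convergent_subseq_convergent[OF r(2)[rule_format, OF that] r'(1)] by (simp add: o_def)
  moreover have "strict_mono (r \<circ> r')"
    using strict_mono_o[OF r(1) r'(1)] .
  ultimately show ?case
    using r'(2) by (intro exI[of _ "r \<circ> r'"]) (auto simp: o_def)
qed

section \<open>Orthogonal projection, Riesz representation and adjoints\<close>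

lemma power2_norm_diff_midpoint:
  "(norm (y - z))\<^sup>2 = 2 * (norm (u - y))\<^sup>2 + 2 * (norm (u - z))\<^sup>2 - 4 * (norm (u - (1/2) *\<^sub>R (y + z)))\<^sup>2"
  for u y z :: "'a::complex_inner"
proof -
  have "u - y + (u - z) = 2 *\<^sub>R (u - (1/2) *\<^sub>R (y + z))"
    by (simp add: algebra_simps scaleR_2)
  hence "(norm (u - y + (u - z)))\<^sup>2 = 4 * (norm (u - (1/2) *\<^sub>R (y + z)))\<^sup>2"
    by (simp add: power_mult_distrib)
  thus ?thesis
    using parallelogram_law[of "u - y" "u - z"] by (simp add: norm_minus_commute)
qed

lemma nearest_point_exists:
  fixes u :: "'a::chilbert_space"
  assumes Z: "closed_csubspace Z"
  obtains p where "p \<in> Z" "\<And>z. z \<in> Z \<Longrightarrow> norm (u - p) \<le> norm (u - z)"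
proof -
  have Zs: "csubspace Z"
    using closed_csubspace_csubspace[OF Z] .
  define d where "d = Inf {norm (u - z) | z. z \<in> Z}"
  have d_le: "d \<le> norm (u - z)" if "z \<in> Z" for z
    unfolding d_def using that by (intro cInf_lower bdd_belowI[of _ 0]) auto
  have d0: "d \<ge> 0"
    unfolding d_def using csubspace_0[OF Zs] by (intro cInf_greatest) auto
  define e where "e m = 1 / real (Suc m)" for m
  have "\<exists>z. z \<in> Z \<and> norm (u - z) < d + e m" for m
  proof -
    have "{norm (u - z) | z. z \<in> Z} \<noteq> {}"
      using csubspace_0[OF Zs] by blast
    from cInf_lessD[OF this, of "d + e m"] show ?thesis
      by (auto simp: d_def e_def)
  qed
  then obtain zs where zs: "\<And>m. zs m \<in> Z" "\<And>m. norm (u - zs m) < d + e m"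
    by metis
  have e: "e \<longlonglongrightarrow> 0"
    unfolding e_def using LIMSEQ_inverse_real_of_nat by (simp add: inverse_eq_divide)
  \<comment> \<open>The midpoint of two points of \<open>Z\<close> lies in \<open>Z\<close>, so the parallelogram law makes \<open>zs\<close> Cauchy.\<close>
  have "(norm (zs m - zs p))\<^sup>2 \<le> 2 * (d + e m)\<^sup>2 + 2 * (d + e p)\<^sup>2 - 4 * d\<^sup>2" for m p
  proof -
    have "(1/2::real) *\<^sub>R (zs m + zs p) \<in> Z"
      by (intro csubspace_scaleR[OF Zs] csubspace_add[OF Zs] zs)
    hence "d\<^sup>2 \<le> (norm (u - (1/2::real) *\<^sub>R (zs m + zs p)))\<^sup>2"
      using d0 d_le by (simp add: power_mono)
    moreover have "(norm (u - zs q))\<^sup>2 \<le> (d + e q)\<^sup>2" for q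
      using zs(2)[of q] by (intro power_mono) auto
    note this[of m] this[of p]
    ultimately show ?thesis
      using power2_norm_diff_midpoint[of "zs m" "zs p" u] by linarith
  qed
  moreover have "((\<lambda>mp. 2 * (d + e (fst mp))\<^sup>2 + 2 * (d + e (snd mp))\<^sup>2 - 4 * d\<^sup>2) \<longlongrightarrow> 0)
      (sequentially \<times>\<^sub>F sequentially)"
  proof -
    have "((\<lambda>mp. 2 * (d + e (fst mp))\<^sup>2 + 2 * (d + e (snd mp))\<^sup>2 - 4 * d\<^sup>2) \<longlongrightarrow>
        2 * (d + 0)\<^sup>2 + 2 * (d + 0)\<^sup>2 - 4 * d\<^sup>2) (sequentially \<times>\<^sub>F sequentially)"
      using filterlim_compose[OF e filterlim_fst] filterlim_compose[OF e filterlim_snd]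
      by (intro tendsto_diff tendsto_add tendsto_mult tendsto_power tendsto_const)
    thus ?thesis
      by simp
  qed
  ultimately have "Cauchy zs"
    by (intro Cauchy_if_diff_tendsto_prod tendsto_norm_zero_if_power2_bounded[where h =
          "\<lambda>mp. 2 * (d + e (fst mp))\<^sup>2 + 2 * (d + e (snd mp))\<^sup>2 - 4 * d\<^sup>2"])
  then obtain p where p: "zs \<longlonglongrightarrow> p"
    using Cauchy_convergent_iff convergent_def by blast
  have "norm (u - p) \<le> d"
  proof (rule tendsto_le[OF trivial_limit_sequentially])
    show "(\<lambda>m. d + e m) \<longlonglongrightarrow> d"
      using tendsto_add[OF tendsto_const e] by simp
    show "(\<lambda>m. norm (u - zs m)) \<longlonglongrightarrow> norm (u - p)"
      by (intro tendsto_intros p)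
    show "\<forall>\<^sub>F m in sequentially. norm (u - zs m) \<le> d + e m"
      using zs(2) by (simp add: less_imp_le)
  qed
  moreover have "p \<in> Z"
    using closed_sequentially[OF closed_csubspace_closed[OF Z] zs(1) p] .
  ultimately show thesis
    using that d_le by force
qed

lemma nearest_point_orthogonal:
  assumes Z: "csubspace Z" and p: "p \<in> Z" and min: "\<And>z. z \<in> Z \<Longrightarrow> norm (u - p) \<le> norm (u - z)"
    and s: "s \<in> Z"
  shows "cinner s (u - p) = 0"
proof (rule ccontr)
  assume c0: "cinner s (u - p) \<noteq> 0"
  define c where "c = cinner s (u - p)"
  define r where "r = 1 / ((norm s)\<^sup>2 + 1)"
  have rp: "(norm s)\<^sup>2 + 1 > 0"
    by (simp add: add_nonneg_pos)
  have r: "r > 0" "r * (norm s)\<^sup>2 < 1"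
    using rp by (simp_all add: r_def)
  \<comment> \<open>Moving from \<open>p\<close> by a small multiple of \<open>c s\<close> would get closer to \<open>u\<close>.\<close>
  define w where "w = u - p"
  define t where "t = complex_of_real r * c"
  have "p + t *\<^sub>C s \<in> Z"
    by (intro csubspace_add[OF Z p] csubspace_scaleC[OF Z s])
  hence "(norm w)\<^sup>2 \<le> (norm (w - t *\<^sub>C s))\<^sup>2"
    using min[of "p + t *\<^sub>C s"] by (simp add: w_def algebra_simps power_mono)
  moreover have "Re (cinner w (t *\<^sub>C s)) = r * (cmod c)\<^sup>2"
  proof -
    have "cinner w (t *\<^sub>C s) = t * cnj c"
      by (simp add: cinner_scaleC_right c_def w_def) (metis cinner_commute)
    also have "\<dots> = complex_of_real (r * (cmod c)\<^sup>2)"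
      using complex_norm_square[of c] by (simp add: t_def mult.assoc)
    finally show ?thesis
      by simp
  qed
  moreover have "norm (t *\<^sub>C s) = r * cmod c * norm s"
    using r by (simp add: norm_scaleC t_def norm_mult)
  ultimately have "0 \<le> (r * cmod c * norm s)\<^sup>2 - 2 * (r * (cmod c)\<^sup>2)"
    by (simp add: power2_norm_diff)
  hence "0 \<le> r * (cmod c)\<^sup>2 * (r * (norm s)\<^sup>2 - 2)"
    by (simp add: power2_eq_square algebra_simps)
  moreover have "r * (cmod c)\<^sup>2 > 0"
    using r c0 by (simp add: c_def)
  ultimately show False
    using r(2) by (simp add: zero_le_mult_iff)
qed

lemma orthogonal_projection_exists:
  fixes u :: "'a::chilbert_space"
  assumes "closed_csubspace Z"
  obtains p where "p \<in> Z" "\<And>s. s \<in> Z \<Longrightarrow> cinner s (u - p) = 0"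
  using nearest_point_exists[OF assms, of u]
    nearest_point_orthogonal[OF closed_csubspace_csubspace[OF assms]] by metis

lemma riesz_representation:
  fixes f :: "'a::chilbert_space \<Rightarrow> complex"
  assumes X: "closed_csubspace X" and f: "bounded_clinear_on X UNIV f"
  obtains z where "z \<in> X" "\<And>x. x \<in> X \<Longrightarrow> cinner z x = f x"
proof (cases "\<forall>x\<in>X. f x = 0")
  case True
  then show thesis
    using that[of 0] csubspace_0[OF closed_csubspace_csubspace[OF X]] by simp
next
  case False
  have Xs: "csubspace X"
    using closed_csubspace_csubspace[OF X] .
  \<comment> \<open>The representing vector is orthogonal to the kernel \<open>N\<close> of \<open>f\<close>.\<close>
  define N where "N = {x\<in>X. f x = 0}"
  obtain w where w: "w \<in> X" "f w \<noteq> 0"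
    using False by blast
  obtain p where p: "p \<in> N" "\<And>s. s \<in> N \<Longrightarrow> cinner s (w - p) = 0"
    using orthogonal_projection_exists[OF closed_csubspace_zero_set[OF X f], of w] by (auto simp: N_def)
  define w0 where "w0 = w - p"
  have pX: "p \<in> X" "f p = 0"
    using p(1) by (auto simp: N_def)
  have w0X: "w0 \<in> X"
    unfolding w0_def using csubspace_diff[OF Xs w(1) pX(1)] .
  have fw0: "f w0 = f w"
    unfolding w0_def using bounded_clinear_on_diff[OF f Xs w(1) pX(1)] pX(2) by simp
  define s where "s = (norm w0)\<^sup>2"
  have s: "s > 0"
    using fw0 w bounded_clinear_on_0[OF f Xs] by (auto simp: s_def)
  define z where "z = (cnj (f w0) / complex_of_real s) *\<^sub>C w0"
  have "cinner z x = f x" if x: "x \<in> X" for x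
  proof -
    define a where "a = f x / f w0"
    have "x - a *\<^sub>C w0 \<in> N"
      using csubspace_diff[OF Xs x csubspace_scaleC[OF Xs w0X]] fw0 w(2)
        bounded_clinear_on_diff[OF f Xs x csubspace_scaleC[OF Xs w0X]]
        bounded_clinear_on_scaleC[OF f w0X]
      by (simp add: N_def a_def)
    hence "cinner (x - a *\<^sub>C w0) w0 = 0"
      using p(2) by (simp add: w0_def)
    hence "cinner x w0 = cnj a * complex_of_real s"
      by (simp add: cinner_diff_left cinner_scaleC_left cinner_self_eq_power2_norm s_def)
    hence "cinner w0 x = a * complex_of_real s"
      by (metis cinner_commute complex_cnj_cnj complex_cnj_complex_of_real complex_cnj_mult)
    thus ?thesis
      using s fw0 w(2) by (simp add: z_def cinner_scaleC_left a_def)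
  qed
  moreover have "z \<in> X"
    unfolding z_def using csubspace_scaleC[OF Xs w0X] .
  ultimately show thesis
    using that by blast
qed

lemma adj_on_eqI:
  assumes X: "csubspace X" and z: "z \<in> X" "\<And>x. x \<in> X \<Longrightarrow> cinner (A x) y = cinner x z"
  shows "adj_on X A y = z"
  unfolding adj_on_def
proof (rule the_equality)
  fix z'
  assume z': "z' \<in> X \<and> (\<forall>x\<in>X. cinner (A x) y = cinner x z')"
  have "z' - z \<in> X"
    using csubspace_diff[OF X] z z' by blast
  hence "cinner (z' - z) (z' - z) = 0"
    using z z' by (simp add: cinner_diff_right)
  thus "z' = z"
    by (simp add: cinner_eq_zero_iff)
qed (use z in blast)

lemma adj_on_char:
  fixes A :: "'a::chilbert_space \<Rightarrow> 'b::complex_inner"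
  assumes X: "closed_csubspace X" and A: "bounded_clinear_on X UNIV A"
  shows "adj_on X A y \<in> X" and "\<And>x. x \<in> X \<Longrightarrow> cinner (A x) y = cinner x (adj_on X A y)"
proof -
  have Xs: "csubspace X"
    using closed_csubspace_csubspace[OF X] .
  obtain K where K: "\<And>x. x \<in> X \<Longrightarrow> norm (A x) \<le> norm x * K"
    using bounded_clinear_on_bound[OF A] by blast
  have "bounded_clinear_on X UNIV (\<lambda>x. cinner y (A x))"
    unfolding bounded_clinear_on_def
  proof (intro conjI ballI allI exI)
    fix x assume x: "x \<in> X"
    show "cmod (cinner y (A x)) \<le> norm x * (norm y * K)"
      using cmod_cinner_le[of y "A x"] mult_left_mono[OF K[OF x], of "norm y"] by (simp add: algebra_simps)
  qed (simp_all add: bounded_clinear_on_add[OF A] bounded_clinear_on_scaleC[OF A]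
      cinner_add_right cinner_scaleC_right)
  then obtain z where z: "z \<in> X" "\<And>x. x \<in> X \<Longrightarrow> cinner z x = cinner y (A x)"
    using riesz_representation[OF X] by blast
  have "\<And>x. x \<in> X \<Longrightarrow> cinner (A x) y = cinner x z"
    using z(2) by (metis cinner_commute)
  with adj_on_eqI[OF Xs z(1)] have "adj_on X A y = z"
    by blast
  with z(1) \<open>\<And>x. x \<in> X \<Longrightarrow> cinner (A x) y = cinner x z\<close>
  show "adj_on X A y \<in> X" "\<And>x. x \<in> X \<Longrightarrow> cinner (A x) y = cinner x (adj_on X A y)"
    by simp_all
qed

lemma adj_on_add:
  fixes A :: "'a::chilbert_space \<Rightarrow> 'b::complex_inner"
  assumes X: "closed_csubspace X" and A: "bounded_clinear_on X UNIV A"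
  shows "adj_on X A (y1 + y2) = adj_on X A y1 + adj_on X A y2"
  by (intro adj_on_eqI csubspace_add closed_csubspace_csubspace[OF X] adj_on_char[OF X A])
    (simp add: cinner_add_right adj_on_char(2)[OF X A])

lemma adj_on_scaleC:
  fixes A :: "'a::chilbert_space \<Rightarrow> 'b::complex_inner"
  assumes X: "closed_csubspace X" and A: "bounded_clinear_on X UNIV A"
  shows "adj_on X A (c *\<^sub>C y) = c *\<^sub>C adj_on X A y"
  by (intro adj_on_eqI csubspace_scaleC closed_csubspace_csubspace[OF X] adj_on_char[OF X A])
    (simp add: cinner_scaleC_right adj_on_char(2)[OF X A])

lemma norm_adj_on_le:
  fixes A :: "'a::chilbert_space \<Rightarrow> 'b::complex_inner"
  assumes X: "closed_csubspace X" and A: "bounded_clinear_on X UNIV A"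
    and K: "K \<ge> 0" "\<And>x. x \<in> X \<Longrightarrow> norm (A x) \<le> norm x * K"
  shows "norm (adj_on X A y) \<le> K * norm y"
proof -
  define z where "z = adj_on X A y"
  have z: "z \<in> X"
    using adj_on_char(1)[OF X A] by (simp add: z_def)
  have "cinner (A z) y = cinner z z"
    using adj_on_char(2)[OF X A z, of y] by (simp add: z_def)
  hence "(norm z)\<^sup>2 = cmod (cinner (A z) y)"
    by (simp only: cinner_self_eq_power2_norm norm_of_real) simp
  also have "\<dots> \<le> norm (A z) * norm y"
    by (rule cmod_cinner_le)
  also have "\<dots> \<le> norm z * (K * norm y)"
    using mult_right_mono[OF K(2)[OF z] norm_ge_zero[of y]] by (simp add: mult.assoc)
  finally show ?thesis
    unfolding z_def[symmetric] using K
    by (cases "norm z = 0") (auto simp: power2_eq_square)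
qed

lemma closed_csubspace_orth_diff:
  fixes X :: "'a::chilbert_space set"
  assumes X: "closed_csubspace X"
  shows "closed_csubspace (orth_diff X S)"
proof -
  have Xs: "csubspace X"
    using closed_csubspace_csubspace[OF X] .
  have "csubspace (orth_diff X S)"
    unfolding csubspace_def orth_diff_def
    by (simp add: csubspace_0[OF Xs] csubspace_add[OF Xs] csubspace_scaleC[OF Xs]
        cinner_add_right cinner_scaleC_right)
  moreover have "closed (orth_diff X S)"
    unfolding closed_sequential_limits
  proof (intro allI impI, elim conjE)
    fix t l
    assume "\<forall>m. t m \<in> orth_diff X S" and l: "t \<longlonglongrightarrow> l"
    hence t: "\<And>m. t m \<in> X" "\<And>m s. s \<in> S \<Longrightarrow> cinner s (t m) = 0"
      by (auto simp: orth_diff_def)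
    have "cinner s l = 0" if "s \<in> S" for s
      using tendsto_cinner_right[OF l, of s] by (simp add: t(2)[OF that] LIMSEQ_const_iff)
    moreover have "l \<in> X"
      using closed_sequentially[OF closed_csubspace_closed[OF X] t(1) l] .
    ultimately show "l \<in> orth_diff X S"
      by (simp add: orth_diff_def)
  qed
  ultimately show ?thesis
    by (simp add: closed_csubspace_def)
qed

lemma orth_diff_subset: "orth_diff X S \<subseteq> X"
  by (auto simp: orth_diff_def)

lemma orth_diff_ker_on_image:
  fixes A :: "'a::chilbert_space \<Rightarrow> 'b::complex_inner"
  assumes X: "closed_csubspace X" and A: "bounded_clinear_on X UNIV A" and x: "x \<in> X"
  obtains d where "d \<in> orth_diff X (ker_on X A)" "A d = A x"
proof -
  have Xs: "csubspace X"
    using closed_csubspace_csubspace[OF X] .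
  have "closed_csubspace (ker_on X A)"
    unfolding ker_on_def by (rule closed_csubspace_zero_set[OF X A])
  then obtain p where p: "p \<in> ker_on X A" "\<And>s. s \<in> ker_on X A \<Longrightarrow> cinner s (x - p) = 0"
    using orthogonal_projection_exists by blast
  have "x - p \<in> orth_diff X (ker_on X A)"
    using csubspace_diff[OF Xs x] p by (auto simp: orth_diff_def ker_on_def)
  moreover have "A (x - p) = A x"
    using bounded_clinear_on_diff[OF A Xs x] p(1) by (simp add: ker_on_def)
  ultimately show thesis
    using that by blast
qed

lemma orth_diff_ker_on_eq_0:
  assumes "d \<in> orth_diff X (ker_on X A)" "A d = 0"
  shows "d = 0"
proof -
  have "cinner d d = 0"
    using assms by (simp add: orth_diff_def ker_on_def)
  thus ?thesis
    by (simp add: cinner_eq_zero_iff)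
qed

lemma compact_op_on_zero:
  assumes "csubspace X" "csubspace Y"
  shows "compact_op_on X Y (\<lambda>x. 0)"
proof -
  have "(\<lambda>x. 0::'b) ` (X \<inter> cball 0 1) = {0}"
    using csubspace_0[OF assms(1)] by auto
  thus ?thesis
    using assms unfolding compact_op_on_def bounded_clinear_on_def
    by (auto simp: csubspace_0 intro!: exI[of _ 0])
qed

lemma compact_op_on_subset:
  assumes K: "compact_op_on X Y K" and S: "S \<subseteq> X"
  shows "compact_op_on S UNIV K"
proof -
  have "closure (K ` (S \<inter> cball 0 1)) \<subseteq> closure (K ` (X \<inter> cball 0 1))"
    using S by (intro closure_mono image_mono) auto
  hence "closure (K ` (S \<inter> cball 0 1)) =
      closure (K ` (X \<inter> cball 0 1)) \<inter> closure (K ` (S \<inter> cball 0 1))"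
    by blast
  moreover have "compact (closure (K ` (X \<inter> cball 0 1)))"
    using K by (simp add: compact_op_on_def)
  ultimately have "compact (closure (K ` (S \<inter> cball 0 1)))"
    by (metis compact_Int_closed closed_closure)
  moreover have "bounded_clinear_on S UNIV K"
    using K bounded_clinear_on_subset[OF _ S] unfolding compact_op_on_def by blast
  ultimately show ?thesis
    by (simp add: compact_op_on_def)
qed

lemma compact_op_on_convergent_subseq:
  fixes K :: "'a::complex_normed_vector \<Rightarrow> 'b::complex_normed_vector"
  assumes K: "compact_op_on X Y K" and s: "\<And>m. s m \<in> X" "\<And>m. norm (s m) \<le> 1"
  shows "\<exists>r::nat \<Rightarrow> nat. strict_mono r \<and> convergent (\<lambda>m. K (s (r m)))"
proof -
  have "compact (closure (K ` (X \<inter> cball 0 1)))"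
    using K by (simp add: compact_op_on_def)
  moreover have "K (s m) \<in> closure (K ` (X \<inter> cball 0 1))" for m
    using s closure_subset by (fastforce simp: mem_cball dist_norm)
  ultimately obtain l r where "strict_mono r" "((\<lambda>m. K (s m)) \<circ> r) \<longlonglongrightarrow> l"
    using seq_compactE[OF compact_imp_seq_compact] by metis
  thus ?thesis
    by (auto simp: convergent_def o_def)
qed

lemma norm_le_op_norm_on:
  assumes T: "bounded_clinear_on X Y T" and X: "csubspace X" and x: "x \<in> X"
  shows "norm (T x) \<le> op_norm_on X T * norm x"
proof (cases "x = 0")
  case True
  then show ?thesis
    using bounded_clinear_on_0[OF T X] by simp
next
  case False
  obtain K where K: "K \<ge> 0" "\<And>x. x \<in> X \<Longrightarrow> norm (T x) \<le> norm x * K"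
    using bounded_clinear_on_bound[OF T] by blast
  have bdd: "bdd_above {norm (T x) | x. x \<in> X \<and> norm x \<le> 1}"
  proof (rule bdd_aboveI)
    fix t
    assume "t \<in> {norm (T x) | x. x \<in> X \<and> norm x \<le> 1}"
    then obtain y where y: "t = norm (T y)" "y \<in> X" "norm y \<le> 1"
      by blast
    show "t \<le> K"
      using K(2)[OF y(2)] mult_right_mono[OF y(3) K(1)] y(1) by simp
  qed
  define u where "u = (1 / norm x) *\<^sub>R x"
  have "u \<in> X" "norm u = 1"
    using False csubspace_scaleR[OF X x] by (simp_all add: u_def)
  hence "norm (T u) \<le> op_norm_on X T"
    unfolding op_norm_on_def by (intro cSup_upper[OF _ bdd]) auto
  moreover have "T u = (1 / norm x) *\<^sub>R T x"
    using bounded_clinear_on_scaleR[OF T x] by (simp add: u_def)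
  ultimately show ?thesis
    using False by (simp add: field_simps)
qed

lemma bounded_clinear_on_plus:
  assumes "bounded_clinear_on X Y S" "bounded_clinear_on X Y' T"
  shows "bounded_clinear_on X UNIV (\<lambda>x. S x + T x)"
proof -
  obtain K L where "\<And>x. x \<in> X \<Longrightarrow> norm (S x) \<le> norm x * K" "\<And>x. x \<in> X \<Longrightarrow> norm (T x) \<le> norm x * L"
    using bounded_clinear_on_bound assms by metis
  hence "\<forall>x\<in>X. norm (S x + T x) \<le> norm x * (K + L)"
    by (metis distrib_left norm_triangle_le add_mono)
  thus ?thesis
    using assms unfolding bounded_clinear_on_def by (auto simp: scaleC_add_right)
qed

lemma bounded_clinear_on_adj_on_comp:
  fixes Ai :: "'a::chilbert_space \<Rightarrow> 'b::chilbert_space"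
  assumes Xi: "closed_csubspace Xi" and Ai: "bounded_clinear_on Xi UNIV Ai"
    and Aj: "bounded_clinear_on Xj Y Aj"
  shows "bounded_clinear_on Xj Xi (\<lambda>x. adj_on Xi Ai (Aj x))"
proof -
  obtain Ki Kj where Ki: "Ki \<ge> 0" "\<And>x. x \<in> Xi \<Longrightarrow> norm (Ai x) \<le> norm x * Ki"
    and Kj: "Kj \<ge> 0" "\<And>x. x \<in> Xj \<Longrightarrow> norm (Aj x) \<le> norm x * Kj"
    using bounded_clinear_on_bound Ai Aj by metis
  have "norm (adj_on Xi Ai (Aj x)) \<le> norm x * (Ki * Kj)" if "x \<in> Xj" for x
    using norm_adj_on_le[OF Xi Ai Ki, of "Aj x"] mult_left_mono[OF Kj(2)[OF that] Ki(1)]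
    by (simp add: algebra_simps)
  thus ?thesis
    using Aj unfolding bounded_clinear_on_def
    by (auto simp: adj_on_char(1)[OF Xi Ai] adj_on_add[OF Xi Ai] adj_on_scaleC[OF Xi Ai])
qed

section \<open>Lower bounds from the essential quantities\<close>

lemma ess_norm_approx:
  assumes "csubspace X" "csubspace Y" "ess_norm X Y T \<le> e" "\<eta> > 0"
  obtains K where "compact_op_on X Y K" "op_norm_on X (\<lambda>x. T x + K x) < e + \<eta>"
proof -
  define N where "N = {op_norm_on X (\<lambda>x. T x + K x) | K. compact_op_on X Y K}"
  have "N \<noteq> {}"
    using compact_op_on_zero[OF assms(1,2)] by (auto simp: N_def)
  moreover have "Inf N < e + \<eta>"
    using assms(3,4) by (simp add: ess_norm_def N_def)
  ultimately obtain t where "t \<in> N" "t < e + \<eta>"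
    using cInf_lessD by blast
  thus thesis
    using that by (auto simp: N_def)
qed

lemma ess_norm_adj_lower_bound:
  fixes Ai :: "'a::chilbert_space \<Rightarrow> 'b::chilbert_space"
  assumes Xi: "closed_csubspace Xi" and Xj: "closed_csubspace Xj"
    and Ai: "bounded_clinear_on Xi UNIV Ai" and Aj: "bounded_clinear_on Xj UNIV Aj"
    and e: "ess_norm Xj Xi (\<lambda>x. adj_on Xi Ai (Aj x)) \<le> e" and \<eta>: "\<eta> > 0"
  obtains K where "compact_op_on Xj Xi K"
    "\<And>x y. x \<in> Xi \<Longrightarrow> y \<in> Xj \<Longrightarrow>
      - (e + \<eta>) * norm x * norm y - Re (cinner x (K y)) \<le> Re (cinner (Ai x) (Aj y))"
proof -
  define S where "S = (\<lambda>x. adj_on Xi Ai (Aj x))"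
  obtain K where K: "compact_op_on Xj Xi K" "op_norm_on Xj (\<lambda>x. S x + K x) < e + \<eta>"
    using ess_norm_approx[OF closed_csubspace_csubspace[OF Xj] closed_csubspace_csubspace[OF Xi] e \<eta>]
    unfolding S_def by blast
  have SK: "bounded_clinear_on Xj UNIV (\<lambda>x. S x + K x)"
    unfolding S_def using bounded_clinear_on_plus bounded_clinear_on_adj_on_comp[OF Xi Ai Aj] K(1)
    by (metis compact_op_on_def)
  have "- (e + \<eta>) * norm x * norm y - Re (cinner x (K y)) \<le> Re (cinner (Ai x) (Aj y))"
    if x: "x \<in> Xi" and y: "y \<in> Xj" for x y
  proof -
    have "op_norm_on Xj (\<lambda>x. S x + K x) * norm y \<le> (e + \<eta>) * norm y"
      using K(2) by (intro mult_right_mono) auto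
    hence "norm (S y + K y) \<le> (e + \<eta>) * norm y"
      using norm_le_op_norm_on[OF SK closed_csubspace_csubspace[OF Xj] y] by linarith
    hence "- Re (cinner x (S y + K y)) \<le> norm x * ((e + \<eta>) * norm y)"
      using abs_Re_le_cmod[of "cinner x (S y + K y)"] cmod_cinner_le[of x "S y + K y"]
        mult_left_mono[of _ _ "norm x"] by fastforce
    moreover have "cinner (Ai x) (Aj y) = cinner x (S y)"
      unfolding S_def by (rule adj_on_char(2)[OF Xi Ai x])
    ultimately show ?thesis
      by (simp add: cinner_add_right algebra_simps)
  qed
  with K(1) show thesis
    using that by blast
qed

lemma ess_red_min_mod_witness:
  assumes "\<not> (\<forall>x\<in>X. A x = 0)" and "ereal t < ess_red_min_mod X A"
  obtains g K where "t < g" "g \<ge> 0"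
    "compact_op_on (orth_diff X (ker_on X A)) (orth_diff X (ker_on X A)) K"
    "\<And>x. x \<in> orth_diff X (ker_on X A) \<Longrightarrow>
      g\<^sup>2 * (norm x)\<^sup>2 \<le> Re (cinner (adj_on X A (A x) + K x) x)"
proof -
  define D where "D = orth_diff X (ker_on X A)"
  define G where "G = {ereal g | g. g \<ge> 0 \<and>
      (\<exists>K. compact_op_on D D K \<and> selfadjoint_on D K \<and>
        (\<forall>x\<in>D. Re (cinner (adj_on X A (A x) + K x) x) \<ge> g\<^sup>2 * (norm x)\<^sup>2))}"
  have "ess_red_min_mod X A = Sup G"
    unfolding ess_red_min_mod_def using assms(1) by (subst if_not_P) (simp_all add: Let_def G_def D_def)
  then obtain s where "s \<in> G" "ereal t < s"
    using assms(2) less_Sup_iff by metis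
  thus thesis
    using that by (auto simp: G_def D_def)
qed

lemma ess_red_min_mod_lower_bound:
  fixes A :: "'a::chilbert_space \<Rightarrow> 'b::chilbert_space"
  assumes X: "closed_csubspace X" and A: "bounded_clinear_on X UNIV A"
    and \<gamma>: "\<gamma> > 0" "ereal \<gamma> \<le> ess_red_min_mod X A" and \<eta>: "\<eta> > 0"
  obtains K where "compact_op_on (orth_diff X (ker_on X A)) UNIV K"
    "\<And>x. x \<in> orth_diff X (ker_on X A) \<Longrightarrow>
      (\<gamma>\<^sup>2 - \<eta>) * (norm x)\<^sup>2 - Re (cinner x (K x)) \<le> (norm (A x))\<^sup>2"
proof (cases "\<forall>x\<in>X. A x = 0")
  case True
  show thesis
  proof (rule that)
    show "compact_op_on (orth_diff X (ker_on X A)) UNIV (\<lambda>x. 0)"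
      using closed_csubspace_csubspace[OF closed_csubspace_orth_diff[OF X]]
      by (intro compact_op_on_zero) (auto simp: csubspace_def)
    fix x
    assume "x \<in> orth_diff X (ker_on X A)"
    hence "x = 0"
      using True orth_diff_ker_on_eq_0 orth_diff_subset by blast
    thus "(\<gamma>\<^sup>2 - \<eta>) * (norm x)\<^sup>2 - Re (cinner x 0) \<le> (norm (A x))\<^sup>2"
      by simp
  qed
next
  case False
  \<comment> \<open>With \<open>\<theta> \<le> \<gamma>\<close> and \<open>2\<gamma>\<theta> \<le> \<eta>\<close>, any \<open>g > \<gamma> - \<theta>\<close> has \<open>g\<^sup>2 \<ge> (\<gamma> - \<theta>)\<^sup>2 \<ge> \<gamma>\<^sup>2 - \<eta>\<close>.\<close>
  define \<theta> where "\<theta> = min \<gamma> (\<eta> / (2 * \<gamma>))"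
  have \<theta>: "0 < \<theta>" "\<theta> \<le> \<gamma>" "2 * \<gamma> * \<theta> \<le> \<eta>"
  proof -
    show "0 < \<theta>" "\<theta> \<le> \<gamma>"
      using \<gamma>(1) \<eta> by (simp_all add: \<theta>_def)
    have "\<theta> \<le> \<eta> / (2 * \<gamma>)"
      by (simp add: \<theta>_def)
    thus "2 * \<gamma> * \<theta> \<le> \<eta>"
      using \<gamma>(1) by (simp add: pos_le_divide_eq mult.commute)
  qed
  have "ereal (\<gamma> - \<theta>) < ereal \<gamma>"
    using \<theta>(1) by simp
  hence "ereal (\<gamma> - \<theta>) < ess_red_min_mod X A"
    using \<gamma>(2) by (rule less_le_trans)
  then obtain g K where g: "\<gamma> - \<theta> < g"
    and K: "compact_op_on (orth_diff X (ker_on X A)) (orth_diff X (ker_on X A)) K"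
    "\<And>x. x \<in> orth_diff X (ker_on X A) \<Longrightarrow> g\<^sup>2 * (norm x)\<^sup>2 \<le> Re (cinner (adj_on X A (A x) + K x) x)"
    using ess_red_min_mod_witness[OF False] by blast
  have "(\<gamma> - \<theta>)\<^sup>2 \<le> g\<^sup>2"
    using g \<theta>(2) by (intro power_mono) auto
  moreover have "(\<gamma> - \<theta>)\<^sup>2 = \<gamma>\<^sup>2 - 2 * \<gamma> * \<theta> + \<theta>\<^sup>2"
    by (simp add: power2_diff)
  ultimately have g2: "\<gamma>\<^sup>2 - \<eta> \<le> g\<^sup>2"
    using \<theta>(3) zero_le_power2[of \<theta>] by linarith
  show thesis
  proof (rule that)
    show "compact_op_on (orth_diff X (ker_on X A)) UNIV K"
      using compact_op_on_subset[OF K(1) subset_refl] .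
    fix x
    assume x: "x \<in> orth_diff X (ker_on X A)"
    have "Re (cinner (adj_on X A (A x) + K x) x) = (norm (A x))\<^sup>2 + Re (cinner x (K x))"
      using adj_on_char(2)[OF X A subsetD[OF orth_diff_subset x], of "A x"]
      by (simp add: cinner_add_left power2_norm_eq_cinner Re_cinner_commute[of _ x])
    moreover have "(\<gamma>\<^sup>2 - \<eta>) * (norm x)\<^sup>2 \<le> g\<^sup>2 * (norm x)\<^sup>2"
      using g2 by (simp add: mult_right_mono)
    ultimately show "(\<gamma>\<^sup>2 - \<eta>) * (norm x)\<^sup>2 - Re (cinner x (K x)) \<le> (norm (A x))\<^sup>2"
      using K(2)[OF x] by linarith
  qed
qed

section \<open>Positive definite quadratic forms\<close>

lemma bounded_coordinates_convergent_subseq: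
  fixes V :: "nat \<Rightarrow> 'i \<Rightarrow> real"
  assumes "finite I" and "\<And>m i. i \<in> I \<Longrightarrow> \<bar>V m i\<bar> \<le> 1"
  obtains r w where "strict_mono r" "\<And>i. i \<in> I \<Longrightarrow> (\<lambda>m. V (r m) i) \<longlonglongrightarrow> w i"
proof -
  have "\<exists>r. strict_mono r \<and> (\<forall>i\<in>I. convergent (\<lambda>m. V (r m) i))"
  proof (rule finite_convergent_subseq[OF assms(1)])
    fix i and r :: "nat \<Rightarrow> nat"
    assume "i \<in> I"
    hence "\<forall>m. V (r m) i \<in> {-1..1}"
      using assms(2) by (simp add: abs_le_iff)
    then obtain l r' where "strict_mono r'" "((\<lambda>m. V (r m) i) \<circ> r') \<longlonglongrightarrow> l"
      using seq_compactE[OF compact_imp_seq_compact[OF compact_Icc]] by metis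
    thus "\<exists>r'. strict_mono r' \<and> convergent (\<lambda>m. V (r (r' m)) i)"
      by (auto simp: convergent_def o_def)
  qed
  then obtain r where "strict_mono r" "\<forall>i\<in>I. convergent (\<lambda>m. V (r m) i)"
    by blast
  thus thesis
    using that[of r "\<lambda>i. lim (\<lambda>m. V (r m) i)"] by (simp add: convergent_LIMSEQ_iff)
qed

lemma pos_def_bounded_below_on_sphere:
  fixes Q :: "'i \<Rightarrow> 'i \<Rightarrow> real"
  assumes fin: "finite I"
    and pd: "\<And>v. \<exists>i\<in>I. v i \<noteq> 0 \<Longrightarrow> (\<Sum>i\<in>I. \<Sum>j\<in>I. v i * Q i j * v j) > 0"
  shows "\<exists>\<delta>>0. \<forall>v. (\<Sum>i\<in>I. (v i)\<^sup>2) = 1 \<longrightarrow> \<delta> \<le> (\<Sum>i\<in>I. \<Sum>j\<in>I. v i * Q i j * v j)"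
proof (rule ccontr)
  define q where "q v = (\<Sum>i\<in>I. \<Sum>j\<in>I. v i * Q i j * v j)" for v :: "'i \<Rightarrow> real"
  define s where "s v = (\<Sum>i\<in>I. (v i)\<^sup>2)" for v :: "'i \<Rightarrow> real"
  assume "\<not> ?thesis"
  hence "\<exists>v. s v = 1 \<and> q v < 1 / real (Suc m)" for m
    unfolding q_def s_def by (meson not_le of_nat_0_less_iff zero_less_Suc zero_less_divide_1_iff)
  then obtain U where sU: "\<And>m. s (U m) = 1" and qU: "\<And>m. q (U m) < 1 / real (Suc m)"
    by metis
  have "\<bar>U m i\<bar> \<le> 1" if "i \<in> I" for m i
    using member_le_sum[of i I "\<lambda>i. (U m i)\<^sup>2"] that fin sU[of m]
    by (simp add: s_def abs_square_le_1)
  then obtain r w where r: "strict_mono r" "\<And>i. i \<in> I \<Longrightarrow> (\<lambda>m. U (r m) i) \<longlonglongrightarrow> w i"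
    using bounded_coordinates_convergent_subseq[OF fin] by blast
  have "(\<lambda>m. s (U (r m))) \<longlonglongrightarrow> s w" and limq: "(\<lambda>m. q (U (r m))) \<longlonglongrightarrow> q w"
    unfolding s_def q_def by (intro tendsto_intros r(2); assumption)+
  hence "s w = 1"
    by (simp add: sU LIMSEQ_const_iff)
  have "q w \<le> 0"
  proof (rule tendsto_le[OF trivial_limit_sequentially _ limq])
    show "(\<lambda>m. 1 / real (Suc (r m))) \<longlonglongrightarrow> 0"
      using LIMSEQ_subseq_LIMSEQ[OF LIMSEQ_inverse_real_of_nat r(1)] by (simp add: o_def inverse_eq_divide)
    show "\<forall>\<^sub>F m in sequentially. q (U (r m)) \<le> 1 / real (Suc (r m))"
      using qU by (simp add: less_imp_le)
  qed
  moreover have "\<exists>i\<in>I. w i \<noteq> 0"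
  proof (rule ccontr)
    assume "\<not> (\<exists>i\<in>I. w i \<noteq> 0)"
    hence "s w = 0"
      by (simp add: s_def)
    thus False
      using \<open>s w = 1\<close> by simp
  qed
  ultimately show False
    using pd[of w] by (simp add: q_def)
qed

lemma pos_def_coercive:
  fixes Q :: "'i \<Rightarrow> 'i \<Rightarrow> real"
  assumes fin: "finite I"
    and pd: "\<And>v. \<exists>i\<in>I. v i \<noteq> 0 \<Longrightarrow> (\<Sum>i\<in>I. \<Sum>j\<in>I. v i * Q i j * v j) > 0"
  shows "\<exists>c>0. \<forall>v. c * (\<Sum>i\<in>I. (v i)\<^sup>2) \<le> (\<Sum>i\<in>I. \<Sum>j\<in>I. v i * Q i j * v j)"
proof -
  define q where "q v = (\<Sum>i\<in>I. \<Sum>j\<in>I. v i * Q i j * v j)" for v :: "'i \<Rightarrow> real"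
  define s where "s v = (\<Sum>i\<in>I. (v i)\<^sup>2)" for v :: "'i \<Rightarrow> real"
  obtain \<delta> where \<delta>: "\<delta> > 0" "\<And>v. s v = 1 \<Longrightarrow> \<delta> \<le> q v"
    using pos_def_bounded_below_on_sphere[OF fin pd] unfolding q_def s_def by blast
  have "\<delta> * s v \<le> q v" for v
  proof (cases "s v = 0")
    case True
    hence "\<forall>i\<in>I. v i = 0"
      using fin by (simp add: s_def sum_nonneg_eq_0_iff)
    thus ?thesis
      using True by (simp add: q_def)
  next
    case False
    hence s: "s v > 0"
      by (simp add: s_def sum_nonneg order_le_neq_trans)
    define u where "u = (\<lambda>i. v i / sqrt (s v))"
    have "s u = 1" "q u = q v / s v"
      using s by (simp_all add: u_def s_def q_def power_divide sum_divide_distrib[symmetric]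
          real_sqrt_mult[symmetric] field_simps)
    thus ?thesis
      using \<delta>(2)[of u] s by (simp add: le_divide_eq)
  qed
  thus ?thesis
    using \<delta>(1) unfolding q_def s_def by blast
qed

lemma quadratic_form_perturbation:
  fixes Q :: "'i \<Rightarrow> 'i \<Rightarrow> real" and \<eta> :: real
  assumes fin: "finite I"
    and coer: "\<And>v. c * (\<Sum>i\<in>I. (v i)\<^sup>2) \<le> (\<Sum>i\<in>I. \<Sum>j\<in>I. v i * Q i j * v j)"
    and \<eta>: "\<eta> \<ge> 0" "\<eta> * card I \<le> c / 2"
  shows "c / 2 * (\<Sum>i\<in>I. (t i)\<^sup>2) \<le> (\<Sum>i\<in>I. \<Sum>j\<in>I. (Q i j - \<eta>) * t i * t j)"
proof -
  have "(\<Sum>i\<in>I. \<Sum>j\<in>I. (Q i j - \<eta>) * t i * t j) =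
      (\<Sum>i\<in>I. \<Sum>j\<in>I. t i * Q i j * t j) - \<eta> * (\<Sum>i\<in>I. t i)\<^sup>2"
    by (simp add: power2_eq_square sum_product sum_distrib_left sum_subtractf[symmetric] algebra_simps)
  moreover have "\<eta> * (\<Sum>i\<in>I. t i)\<^sup>2 \<le> \<eta> * ((\<Sum>i\<in>I. (t i)\<^sup>2) * card I)"
    using sum_squared_le_sum_of_squares \<eta>(1) by (rule mult_left_mono)
  moreover have "\<eta> * ((\<Sum>i\<in>I. (t i)\<^sup>2) * card I) \<le> c / 2 * (\<Sum>i\<in>I. (t i)\<^sup>2)"
    using mult_right_mono[OF \<eta>(2), of "\<Sum>i\<in>I. (t i)\<^sup>2"] by (simp add: sum_nonneg algebra_simps)
  ultimately show ?thesis
    using coer[of t] by linarith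
qed

lemma cspan_fin_0: "0 \<in> cspan_fin F"
  unfolding cspan_fin_def by (auto intro!: exI[of _ "\<lambda>_. 0"])

lemma cspan_fin_add:
  assumes "x \<in> cspan_fin F" "y \<in> cspan_fin F"
  shows "x + y \<in> cspan_fin F"
proof -
  obtain a b where "x = (\<Sum>v\<in>F. a v *\<^sub>C v)" "y = (\<Sum>v\<in>F. b v *\<^sub>C v)"
    using assms unfolding cspan_fin_def by blast
  hence "x + y = (\<Sum>v\<in>F. (a v + b v) *\<^sub>C v)"
    by (simp add: sum.distrib scaleC_add_left)
  thus ?thesis
    unfolding cspan_fin_def by (auto intro!: exI[of _ "\<lambda>v. a v + b v"])
qed

lemma cspan_fin_scaleC:
  assumes "x \<in> cspan_fin F"
  shows "a *\<^sub>C x \<in> cspan_fin F"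
proof -
  obtain b where "x = (\<Sum>v\<in>F. b v *\<^sub>C v)"
    using assms unfolding cspan_fin_def by blast
  hence "a *\<^sub>C x = (\<Sum>v\<in>F. (a * b v) *\<^sub>C v)"
    by (simp add: scaleC_sum_right scaleC_scaleC)
  thus ?thesis
    unfolding cspan_fin_def by (auto intro!: exI[of _ "\<lambda>v. a * b v"])
qed

lemma cspan_fin_superset: "finite F \<Longrightarrow> v \<in> F \<Longrightarrow> v \<in> cspan_fin F"
  unfolding cspan_fin_def
  by (intro CollectI exI[of _ "\<lambda>w. if w = v then 1 else 0"])
    (simp add: if_distrib[of "\<lambda>a. a *\<^sub>C _"] scaleC_one sum.delta cong: if_cong)

lemma cspan_fin_sum: "(\<And>e. e \<in> E \<Longrightarrow> f e \<in> cspan_fin F) \<Longrightarrow> (\<Sum>e\<in>E. a e *\<^sub>C f e) \<in> cspan_fin F"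
  by (induction E rule: infinite_finite_induct) (auto simp: cspan_fin_0 cspan_fin_add cspan_fin_scaleC)

lemma finite_dim_subset: "finite_dim T \<Longrightarrow> S \<subseteq> T \<Longrightarrow> finite_dim S"
  unfolding finite_dim_def by blast

section \<open>Operators on a finite direct sum that are coercive modulo compact operators\<close>

text \<open>
  An element of the direct sum of the \<open>D k\<close>, \<open>k \<in> I\<close>, is a function \<open>x\<close> with \<open>x k \<in> D k\<close>; its
  values outside \<open>I\<close> play no role in any of the notions below.
\<close>

locale coercive_mod_compact =
  fixes I :: "'i set" and D :: "'i \<Rightarrow> 'a::chilbert_space set"
    and A :: "'i \<Rightarrow> 'a \<Rightarrow> 'b::chilbert_space" and K :: "'i \<Rightarrow> 'i \<Rightarrow> 'a \<Rightarrow> 'a" and c :: real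
  assumes finite_I: "finite I"
    and closed_csubspace_D: "\<And>k. k \<in> I \<Longrightarrow> closed_csubspace (D k)"
    and bounded_A: "\<And>k. k \<in> I \<Longrightarrow> bounded_clinear_on (D k) UNIV (A k)"
    and compact_K: "\<And>i j. i \<in> I \<Longrightarrow> j \<in> I \<Longrightarrow> compact_op_on (D j) UNIV (K i j)"
    and c_pos: "c > 0"
    and lower_bound: "\<And>x. (\<And>k. k \<in> I \<Longrightarrow> x k \<in> D k) \<Longrightarrow>
      c * (\<Sum>k\<in>I. (norm (x k))\<^sup>2) \<le> (norm (\<Sum>k\<in>I. A k (x k)))\<^sup>2 + (\<Sum>i\<in>I. \<Sum>j\<in>I. Re (cinner (x i) (K i j (x j))))"
begin

definition in_D :: "('i \<Rightarrow> 'a) \<Rightarrow> bool"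
  where "in_D x \<longleftrightarrow> (\<forall>k\<in>I. x k \<in> D k)"

definition T :: "('i \<Rightarrow> 'a) \<Rightarrow> 'b"
  where "T x = (\<Sum>k\<in>I. A k (x k))"

definition dinner :: "('i \<Rightarrow> 'a) \<Rightarrow> ('i \<Rightarrow> 'a) \<Rightarrow> complex"
  where "dinner x y = (\<Sum>k\<in>I. cinner (x k) (y k))"

definition dnorm2 :: "('i \<Rightarrow> 'a) \<Rightarrow> real"
  where "dnorm2 x = (\<Sum>k\<in>I. (norm (x k))\<^sup>2)"

definition null_T :: "('i \<Rightarrow> 'a) set"
  where "null_T = {x. in_D x \<and> T x = 0}"

definition dspan :: "('i \<Rightarrow> 'a) set \<Rightarrow> ('i \<Rightarrow> 'a) set"
  where "dspan E = {x. \<exists>a. \<forall>k\<in>I. x k = (\<Sum>e\<in>E. a e *\<^sub>C e k)}"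

definition orthonormal :: "('i \<Rightarrow> 'a) set \<Rightarrow> bool"
  where "orthonormal E \<longleftrightarrow> (\<forall>e\<in>E. dinner e e = 1) \<and> (\<forall>e\<in>E. \<forall>e'\<in>E. e \<noteq> e' \<longrightarrow> dinner e e' = 0)"

lemma csubspace_D: "k \<in> I \<Longrightarrow> csubspace (D k)"
  using closed_csubspace_csubspace[OF closed_csubspace_D] .

lemma lower_bound_in_D:
  "in_D x \<Longrightarrow> c * dnorm2 x \<le> (norm (T x))\<^sup>2 + (\<Sum>i\<in>I. \<Sum>j\<in>I. Re (cinner (x i) (K i j (x j))))"
  using lower_bound[of x] by (simp add: in_D_def T_def dnorm2_def)

lemma in_D_diff: "in_D x \<Longrightarrow> in_D y \<Longrightarrow> in_D (\<lambda>k. x k - y k)"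
  unfolding in_D_def using csubspace_diff[OF csubspace_D] by blast

lemma in_D_scaleC: "in_D x \<Longrightarrow> in_D (\<lambda>k. a *\<^sub>C x k)"
  unfolding in_D_def using csubspace_scaleC[OF csubspace_D] by blast

lemma in_D_comb: "(\<And>e. e \<in> E \<Longrightarrow> in_D e) \<Longrightarrow> in_D (\<lambda>k. \<Sum>e\<in>E. a e *\<^sub>C e k)"
  unfolding in_D_def by (blast intro: csubspace_sum[OF csubspace_D] csubspace_scaleC[OF csubspace_D])

lemma T_diff: "in_D x \<Longrightarrow> in_D y \<Longrightarrow> T (\<lambda>k. x k - y k) = T x - T y"
  unfolding T_def in_D_def by (simp add: bounded_clinear_on_diff[OF bounded_A csubspace_D] sum_subtractf)

lemma T_scaleC: "in_D x \<Longrightarrow> T (\<lambda>k. a *\<^sub>C x k) = a *\<^sub>C T x"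
  unfolding T_def in_D_def by (simp add: bounded_clinear_on_scaleC[OF bounded_A] scaleC_sum_right)

lemma T_comb:
  assumes "\<And>e. e \<in> E \<Longrightarrow> in_D e"
  shows "T (\<lambda>k. \<Sum>e\<in>E. a e *\<^sub>C e k) = (\<Sum>e\<in>E. a e *\<^sub>C T e)"
proof -
  have "A k (\<Sum>e\<in>E. a e *\<^sub>C e k) = (\<Sum>e\<in>E. a e *\<^sub>C A k (e k))" if k: "k \<in> I" for k
  proof -
    have "e k \<in> D k" if "e \<in> E" for e
      using assms that k by (simp add: in_D_def)
    thus ?thesis
      by (simp add: bounded_clinear_on_sum[OF bounded_A[OF k] csubspace_D[OF k]] csubspace_scaleC[OF csubspace_D[OF k]]
          bounded_clinear_on_scaleC[OF bounded_A[OF k]])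
  qed
  hence "T (\<lambda>k. \<Sum>e\<in>E. a e *\<^sub>C e k) = (\<Sum>k\<in>I. \<Sum>e\<in>E. a e *\<^sub>C A k (e k))"
    unfolding T_def by simp
  also have "\<dots> = (\<Sum>e\<in>E. a e *\<^sub>C T e)"
    unfolding T_def by (subst sum.swap) (simp add: scaleC_sum_right)
  finally show ?thesis .
qed

lemma dnorm2_nonneg: "dnorm2 x \<ge> 0"
  by (simp add: dnorm2_def sum_nonneg)

lemma power2_norm_le_dnorm2: "k \<in> I \<Longrightarrow> (norm (x k))\<^sup>2 \<le> dnorm2 x"
  unfolding dnorm2_def using finite_I by (intro member_le_sum) auto

lemma dnorm2_eq_0D: "dnorm2 x = 0 \<Longrightarrow> k \<in> I \<Longrightarrow> x k = 0"
  using power2_norm_le_dnorm2[of k x] by simp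

lemma dinner_self: "dinner x x = complex_of_real (dnorm2 x)"
  by (simp add: dinner_def dnorm2_def cinner_self_eq_power2_norm)

lemma dinner_commute: "dinner x y = cnj (dinner y x)"
  unfolding dinner_def by (subst cinner_commute) simp

lemma dinner_diff_right: "dinner x (\<lambda>k. y k - z k) = dinner x y - dinner x z"
  unfolding dinner_def by (simp add: cinner_diff_right sum_subtractf)

lemma dinner_scaleC_right: "dinner x (\<lambda>k. a *\<^sub>C y k) = a * dinner x y"
  unfolding dinner_def by (simp add: cinner_scaleC_right sum_distrib_left)

lemma dinner_scaleC_left: "dinner (\<lambda>k. a *\<^sub>C y k) x = cnj a * dinner y x"
  unfolding dinner_def by (simp add: cinner_scaleC_left sum_distrib_left)

lemma dinner_comb_right: "dinner x (\<lambda>k. \<Sum>e\<in>E. a e *\<^sub>C e k) = (\<Sum>e\<in>E. a e * dinner x e)"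
  unfolding dinner_def
  by (simp add: cinner_sum_right cinner_scaleC_right sum_distrib_left sum.swap[of _ I])

lemma dinner_comb_left: "dinner (\<lambda>k. \<Sum>e\<in>E. a e *\<^sub>C e k) x = (\<Sum>e\<in>E. cnj (a e) * dinner e x)"
  unfolding dinner_def
  by (simp add: cinner_sum_left cinner_scaleC_left sum_distrib_left sum.swap[of _ I])

lemma dnorm2_diff: "dnorm2 (\<lambda>k. x k - y k) = dnorm2 x + dnorm2 y - 2 * Re (dinner x y)"
  unfolding dnorm2_def dinner_def
  by (simp add: power2_norm_diff sum.distrib sum_subtractf sum_distrib_left)

lemma dspan_dinner_zero:
  assumes "x \<in> dspan E" "\<And>e. e \<in> E \<Longrightarrow> dinner e x = 0"
  shows "dinner x x = 0"
proof -
  obtain a where a: "\<forall>k\<in>I. x k = (\<Sum>e\<in>E. a e *\<^sub>C e k)"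
    using assms(1) by (auto simp: dspan_def)
  have "dinner x x = dinner (\<lambda>k. \<Sum>e\<in>E. a e *\<^sub>C e k) x"
    unfolding dinner_def using a by simp
  thus ?thesis
    by (simp add: dinner_comb_left assms(2))
qed
lemma norm_le_1_if_dnorm2_le_1:
  assumes "dnorm2 x \<le> 1" "k \<in> I"
  shows "norm (x k) \<le> 1"
proof (rule power2_le_imp_le)
  show "(norm (x k))\<^sup>2 \<le> 1\<^sup>2"
    using power2_norm_le_dnorm2[OF assms(2), of x] assms(1) by simp
qed simp

lemma T_tendsto:
  assumes "\<And>m. in_D (y m)" "in_D L" "\<And>k. k \<in> I \<Longrightarrow> (\<lambda>m. y m k) \<longlonglongrightarrow> L k"
  shows "(\<lambda>m. T (y m)) \<longlonglongrightarrow> T L"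
  unfolding T_def using assms
  by (intro tendsto_sum bounded_clinear_on_tendsto[OF bounded_A csubspace_D]) (auto simp: in_D_def)

lemma dinner_tendsto:
  assumes "\<And>k. k \<in> I \<Longrightarrow> (\<lambda>m. y m k) \<longlonglongrightarrow> L k"
  shows "(\<lambda>m. dinner e (y m)) \<longlonglongrightarrow> dinner e L"
  unfolding dinner_def using assms by (intro tendsto_sum tendsto_cinner_right)

lemma dnorm2_tendsto:
  assumes "\<And>k. k \<in> I \<Longrightarrow> (\<lambda>m. y m k) \<longlonglongrightarrow> L k"
  shows "(\<lambda>m. dnorm2 (y m)) \<longlonglongrightarrow> dnorm2 L"
  unfolding dnorm2_def using assms by (intro tendsto_sum tendsto_power tendsto_norm)

lemma Cauchy_components_converge:
  assumes "\<And>k. k \<in> I \<Longrightarrow> Cauchy (\<lambda>m. y m k)" and "\<And>m. in_D (y m)"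
  obtains L where "in_D L" "\<And>k. k \<in> I \<Longrightarrow> (\<lambda>m. y m k) \<longlonglongrightarrow> L k"
proof -
  define L where "L k = lim (\<lambda>m. y m k)" for k
  have L: "(\<lambda>m. y m k) \<longlonglongrightarrow> L k" if "k \<in> I" for k
    using assms(1)[OF that] by (simp add: L_def Cauchy_convergent_iff convergent_LIMSEQ_iff)
  have "L k \<in> D k" if "k \<in> I" for k
    using closed_sequentially[OF closed_csubspace_closed[OF closed_csubspace_D[OF that]] _ L[OF that]]
      assms(2) that by (simp add: in_D_def)
  thus thesis
    using that[of L] L by (simp add: in_D_def)
qed

lemma compact_terms_convergent_subseq:
  fixes x :: "nat \<Rightarrow> 'i \<Rightarrow> 'a"
  assumes x: "\<And>m. in_D (x m)" "\<And>m. dnorm2 (x m) \<le> 1"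
  obtains r where "strict_mono r" "\<And>i j. i \<in> I \<Longrightarrow> j \<in> I \<Longrightarrow> convergent (\<lambda>m. K i j (x (r m) j))"
proof -
  have "\<exists>r::nat \<Rightarrow> nat. strict_mono r \<and> (\<forall>p\<in>I \<times> I. convergent (\<lambda>m. K (fst p) (snd p) (x (r m) (snd p))))"
  proof (rule finite_convergent_subseq)
    show "finite (I \<times> I)"
      using finite_I by simp
    fix p and r :: "nat \<Rightarrow> nat"
    assume "p \<in> I \<times> I"
    hence "fst p \<in> I" "snd p \<in> I"
      by auto
    thus "\<exists>r'. strict_mono r' \<and> convergent (\<lambda>m. K (fst p) (snd p) (x (r (r' m)) (snd p)))"
      using compact_op_on_convergent_subseq[OF compact_K, of "fst p" "snd p" "\<lambda>m. x (r m) (snd p)"]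
        x norm_le_1_if_dnorm2_le_1 by (simp add: in_D_def)
  qed
  thus thesis
    using that by force
qed

lemma lower_bound_diff:
  assumes ab: "in_D a" "in_D b" "dnorm2 a \<le> 1" "dnorm2 b \<le> 1"
  shows "c * dnorm2 (\<lambda>k. a k - b k) \<le>
    (norm (T a - T b))\<^sup>2 + (\<Sum>i\<in>I. \<Sum>j\<in>I. 2 * norm (K i j (a j) - K i j (b j)))"
proof -
  have "Re (cinner (a i - b i) (K i j (a j - b j))) \<le> 2 * norm (K i j (a j) - K i j (b j))"
    if ij: "i \<in> I" "j \<in> I" for i j
  proof -
    have "bounded_clinear_on (D j) UNIV (K i j)"
      using compact_K[OF ij] by (simp add: compact_op_on_def)
    hence Kdiff: "K i j (a j - b j) = K i j (a j) - K i j (b j)"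
      using ab(1,2) ij by (simp add: in_D_def bounded_clinear_on_diff[OF _ csubspace_D])
    have "norm (a i - b i) \<le> 2"
      using norm_triangle_ineq4[of "a i" "b i"] norm_le_1_if_dnorm2_le_1[OF ab(3) ij(1)]
        norm_le_1_if_dnorm2_le_1[OF ab(4) ij(1)] by linarith
    have "Re (cinner (a i - b i) (K i j (a j - b j))) \<le> cmod (cinner (a i - b i) (K i j (a j - b j)))"
      by (rule complex_Re_le_cmod)
    also have "\<dots> \<le> norm (a i - b i) * norm (K i j (a j - b j))"
      by (rule cmod_cinner_le)
    also have "\<dots> \<le> 2 * norm (K i j (a j - b j))"
      using \<open>norm (a i - b i) \<le> 2\<close> by (simp add: mult_right_mono)
    finally show ?thesis
      unfolding Kdiff .
  qed
  hence "(\<Sum>i\<in>I. \<Sum>j\<in>I. Re (cinner (a i - b i) (K i j (a j - b j)))) \<le>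
      (\<Sum>i\<in>I. \<Sum>j\<in>I. 2 * norm (K i j (a j) - K i j (b j)))"
    by (intro sum_mono) auto
  thus ?thesis
    using lower_bound_in_D[OF in_D_diff[OF ab(1,2)]] T_diff[OF ab(1,2)] by simp
qed

lemma Cauchy_subseq_if_T_convergent:
  fixes x :: "nat \<Rightarrow> 'i \<Rightarrow> 'a"
  assumes x: "\<And>m. in_D (x m)" "\<And>m. dnorm2 (x m) \<le> 1" and Tx: "convergent (\<lambda>m. T (x m))"
  obtains r where "strict_mono r" "\<And>k. k \<in> I \<Longrightarrow> Cauchy (\<lambda>m. x (r m) k)"
proof -
  obtain r where r: "strict_mono r" "\<And>i j. i \<in> I \<Longrightarrow> j \<in> I \<Longrightarrow> convergent (\<lambda>m. K i j (x (r m) j))"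
    using compact_terms_convergent_subseq[of x, OF x] by blast
  define F where "F = (sequentially \<times>\<^sub>F sequentially :: (nat \<times> nat) filter)"
  define a where "a mp = x (r (fst mp))" for mp :: "nat \<times> nat"
  define b where "b mp = x (r (snd mp))" for mp :: "nat \<times> nat"
  define h where "h mp = ((norm (T (a mp) - T (b mp)))\<^sup>2 +
      (\<Sum>i\<in>I. \<Sum>j\<in>I. 2 * norm (K i j (a mp j) - K i j (b mp j)))) / c" for mp
  \<comment> \<open>Along the subsequence both \<open>T x\<close> and all compact terms converge, so \<open>h\<close> tends to zero.\<close>
  have "((\<lambda>mp. T (a mp) - T (b mp)) \<longlongrightarrow> 0) F"
    using convergent_diff_tendsto_prod[OF convergent_subseq_convergent[OF Tx r(1)]]
    by (simp add: F_def a_def b_def o_def)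
  hence "((\<lambda>mp. (norm (T (a mp) - T (b mp)))\<^sup>2) \<longlongrightarrow> 0) F"
    using tendsto_power[OF tendsto_norm, of _ 0 F 2] by simp
  moreover have "((\<lambda>mp. \<Sum>i\<in>I. \<Sum>j\<in>I. 2 * norm (K i j (a mp j) - K i j (b mp j))) \<longlongrightarrow> 0) F"
  proof (intro tendsto_null_sum)
    fix i j
    assume "i \<in> I" "j \<in> I"
    from convergent_diff_tendsto_prod[OF r(2)[OF this]]
    show "((\<lambda>mp. 2 * norm (K i j (a mp j) - K i j (b mp j))) \<longlongrightarrow> 0) F"
      using tendsto_mult_right_zero[OF tendsto_norm_zero] by (simp add: F_def a_def b_def)
  qed
  ultimately have h: "(h \<longlongrightarrow> 0) F"
    unfolding h_def by (intro tendsto_divide_zero tendsto_add_zero)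
  have "(norm (a mp k - b mp k))\<^sup>2 \<le> h mp" if "k \<in> I" for k mp
  proof -
    have "c * dnorm2 (\<lambda>k. a mp k - b mp k) \<le> h mp * c"
      using lower_bound_diff[of "a mp" "b mp"] x c_pos by (simp add: a_def b_def h_def)
    hence "dnorm2 (\<lambda>k. a mp k - b mp k) \<le> h mp"
      using c_pos by (simp add: mult.commute)
    thus ?thesis
      using power2_norm_le_dnorm2[OF that, of "\<lambda>k. a mp k - b mp k"] by simp
  qed
  hence "Cauchy (\<lambda>m. x (r m) k)" if "k \<in> I" for k
    using tendsto_norm_zero_if_power2_bounded[of "\<lambda>mp. a mp k - b mp k", OF _ h] that
    by (intro Cauchy_if_diff_tendsto_prod) (simp add: F_def a_def b_def)
  thus thesis
    using that r(1) by blast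
qed
definition residual :: "('i \<Rightarrow> 'a) set \<Rightarrow> ('i \<Rightarrow> 'a) \<Rightarrow> 'i \<Rightarrow> 'a"
  where "residual E w = (\<lambda>k. w k - (\<Sum>e\<in>E. dinner e w *\<^sub>C e k))"

lemma residual_in_D: "(\<And>e. e \<in> E \<Longrightarrow> in_D e) \<Longrightarrow> in_D w \<Longrightarrow> in_D (residual E w)"
  unfolding residual_def by (intro in_D_diff in_D_comb)

lemma T_residual:
  assumes "E \<subseteq> null_T" "in_D w"
  shows "T (residual E w) = T w"
proof -
  have "\<And>e. e \<in> E \<Longrightarrow> in_D e" "\<And>e. e \<in> E \<Longrightarrow> T e = 0"
    using assms(1) by (auto simp: null_T_def)
  thus ?thesis
    unfolding residual_def using T_diff[OF assms(2) in_D_comb] T_comb by simp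
qed

lemma dinner_residual:
  assumes E: "finite E" "orthonormal E" and e': "e' \<in> E"
  shows "dinner e' (residual E w) = 0"
proof -
  have "(\<Sum>e\<in>E. dinner e w * dinner e' e) = dinner e' w * dinner e' e' + (\<Sum>e\<in>E - {e'}. dinner e w * dinner e' e)"
    using E(1) e' by (simp add: sum.remove)
  also have "(\<Sum>e\<in>E - {e'}. dinner e w * dinner e' e) = 0"
    using E(2) e' unfolding orthonormal_def by (intro sum.neutral) auto
  also have "dinner e' e' = 1"
    using E(2) e' by (simp add: orthonormal_def)
  finally show ?thesis
    unfolding residual_def by (simp add: dinner_diff_right dinner_comb_right)
qed

lemma residual_eq_0_imp_dspan: "(\<And>k. k \<in> I \<Longrightarrow> residual E w k = 0) \<Longrightarrow> w \<in> dspan E"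
  unfolding residual_def dspan_def by (auto intro!: exI[of _ "\<lambda>e. dinner e w"])

lemma normalize_in_D:
  assumes x: "in_D x" and pos: "dnorm2 x > 0"
  defines "y \<equiv> \<lambda>k. complex_of_real (1 / sqrt (dnorm2 x)) *\<^sub>C x k"
  shows "in_D y" "dinner y y = 1" "dnorm2 y = 1" "T y = complex_of_real (1 / sqrt (dnorm2 x)) *\<^sub>C T x"
    "(norm (T y))\<^sup>2 = (norm (T x))\<^sup>2 / dnorm2 x"
    "\<And>e. dinner e y = complex_of_real (1 / sqrt (dnorm2 x)) * dinner e x"
proof -
  show "in_D y" and Ty: "T y = complex_of_real (1 / sqrt (dnorm2 x)) *\<^sub>C T x"
    unfolding y_def using in_D_scaleC[OF x] T_scaleC[OF x] by simp_all
  show "(norm (T y))\<^sup>2 = (norm (T x))\<^sup>2 / dnorm2 x"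
    using pos unfolding Ty norm_scaleC norm_of_real by (simp add: power_mult_distrib power_divide)
  show "dinner y y = 1"
    using pos by (simp add: y_def dinner_scaleC_left dinner_scaleC_right dinner_self
        power2_eq_square[symmetric] flip: of_real_mult of_real_power)
  thus "dnorm2 y = 1"
    by (simp add: dinner_self)
  show "\<And>e. dinner e y = complex_of_real (1 / sqrt (dnorm2 x)) * dinner e x"
    by (simp add: y_def dinner_scaleC_right)
qed

lemma gram_schmidt_step:
  assumes E: "finite E" "orthonormal E" "E \<subseteq> null_T" and v: "v \<in> null_T" "v \<notin> dspan E"
  obtains e where "e \<in> null_T" "dinner e e = 1" "\<And>e'. e' \<in> E \<Longrightarrow> dinner e' e = 0"
proof -
  define w where "w = residual E v"
  have ED: "\<And>e. e \<in> E \<Longrightarrow> in_D e" and vD: "in_D v" "T v = 0"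
    using E(3) v(1) by (auto simp: null_T_def)
  have w: "in_D w" "T w = 0" "\<And>e'. e' \<in> E \<Longrightarrow> dinner e' w = 0"
    unfolding w_def using residual_in_D[OF ED vD(1)] T_residual[OF E(3) vD(1)] vD(2)
      dinner_residual[OF E(1,2)] by simp_all
  have "dnorm2 w \<noteq> 0"
    using v(2) dnorm2_eq_0D residual_eq_0_imp_dspan unfolding w_def by blast
  hence "dnorm2 w > 0"
    using dnorm2_nonneg[of w] by linarith
  note n = normalize_in_D[OF w(1) this]
  show thesis
    by (rule that[of "\<lambda>k. complex_of_real (1 / sqrt (dnorm2 w)) *\<^sub>C w k"])
      (use n w in \<open>simp_all add: null_T_def\<close>)
qed

lemma no_orthonormal_sequence_in_null_T:
  fixes q :: "nat \<Rightarrow> 'i \<Rightarrow> 'a"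
  assumes q: "\<And>m. q m \<in> null_T" "\<And>m. dinner (q m) (q m) = 1" "\<And>m p. m \<noteq> p \<Longrightarrow> dinner (q m) (q p) = 0"
  shows False
proof -
  have qD: "\<And>m. in_D (q m)" and Tq: "\<And>m. T (q m) = 0"
    using q(1) by (auto simp: null_T_def)
  have nq: "dnorm2 (q m) = 1" for m
    using q(2)[of m] by (simp add: dinner_self)
  obtain r where r: "strict_mono r" "\<And>k. k \<in> I \<Longrightarrow> Cauchy (\<lambda>m. q (r m) k)"
    using Cauchy_subseq_if_T_convergent[of q, OF qD] nq Tq by (auto simp: convergent_const)
  obtain L where L: "\<And>k. k \<in> I \<Longrightarrow> (\<lambda>m. q (r m) k) \<longlonglongrightarrow> L k"
    using Cauchy_components_converge[of "\<lambda>m. q (r m)", OF r(2) qD] by blast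
  \<comment> \<open>Consecutive terms of the subsequence stay at distance \<open>\<surd>2\<close> but converge to the same limit.\<close>
  have "(\<lambda>m. dnorm2 (\<lambda>k. q (r m) k - q (r (Suc m)) k)) \<longlonglongrightarrow> dnorm2 (\<lambda>k. L k - L k)"
    using L by (intro dnorm2_tendsto tendsto_diff LIMSEQ_Suc) auto
  moreover have "dnorm2 (\<lambda>k. q (r m) k - q (r (Suc m)) k) = 2" for m
    using q(3)[of "r m" "r (Suc m)"] strict_monoD[OF r(1) lessI[of m]] nq by (simp add: dnorm2_diff)
  ultimately show False
    by (simp add: dnorm2_def LIMSEQ_const_iff)
qed
lemma dinner_eq_0_commute: "dinner x y = 0 \<longleftrightarrow> dinner y x = 0"
  using dinner_commute[of x y] by auto

lemma orthonormal_insert: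
  assumes "orthonormal E" "dinner e e = 1" "\<And>e'. e' \<in> E \<Longrightarrow> dinner e' e = 0"
  shows "orthonormal (insert e E)"
  using assms dinner_eq_0_commute unfolding orthonormal_def by blast

lemma null_T_finite_basis:
  obtains E where "finite E" "orthonormal E" "E \<subseteq> null_T" "null_T \<subseteq> dspan E"
proof -
  have "\<exists>E. finite E \<and> orthonormal E \<and> E \<subseteq> null_T \<and> null_T \<subseteq> dspan E"
  proof (rule ccontr)
    assume no_basis: "\<not> ?thesis"
    define P where "P E e \<longleftrightarrow> e \<in> null_T \<and> dinner e e = 1 \<and> (\<forall>e'\<in>E. dinner e' e = 0)" for E e
    have extend: "P E (SOME e. P E e)" if E: "finite E" "orthonormal E" "E \<subseteq> null_T" for E
    proof -
      have "\<not> null_T \<subseteq> dspan E"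
        using no_basis E by blast
      then obtain v where "v \<in> null_T" "v \<notin> dspan E"
        by blast
      then obtain e where "e \<in> null_T" "dinner e e = 1" "\<And>e'. e' \<in> E \<Longrightarrow> dinner e' e = 0"
        using gram_schmidt_step[OF E] by blast
      hence "P E e"
        by (simp add: P_def)
      thus ?thesis
        by (rule someI[of "P E"])
    qed
    \<comment> \<open>Extend the empty family step by step to an infinite orthonormal sequence in the kernel.\<close>
    define S where "S = rec_nat {} (\<lambda>_ S. insert (SOME e. P S e) S)"
    define q where "q m = (SOME e. P (S m) e)" for m
    have S0: "S 0 = {}" and S_Suc: "S (Suc m) = insert (q m) (S m)" for m
      by (simp_all add: S_def q_def)
    have inv: "finite (S m) \<and> orthonormal (S m) \<and> S m \<subseteq> null_T" for m
    proof (induction m)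
      case 0
      show ?case
        by (simp add: S0 orthonormal_def)
    next
      case (Suc m)
      hence "P (S m) (q m)"
        unfolding q_def using extend by blast
      thus ?case
        using Suc unfolding S_Suc P_def by (auto intro: orthonormal_insert)
    qed
    have qP: "P (S m) (q m)" for m
      unfolding q_def using extend inv by blast
    have qS: "q p \<in> S m" if "p < m" for p m
      using that by (induction m) (auto simp: S_Suc less_Suc_eq)
    have "dinner (q m) (q p) = 0" if "m \<noteq> p" for m p
    proof (cases "m < p")
      case True
      thus ?thesis
        using qP[of p] qS[OF True] by (simp add: P_def)
    next
      case False
      hence "p < m"
        using that by simp
      hence "dinner (q p) (q m) = 0"
        using qP[of m] qS by (simp add: P_def)
      thus ?thesis
        using dinner_eq_0_commute by blast
    qed
    moreover have "q m \<in> null_T" "dinner (q m) (q m) = 1" for m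
      using qP[of m] by (simp_all add: P_def)
    ultimately show False
      using no_orthonormal_sequence_in_null_T by blast
  qed
  thus thesis
    using that by blast
qed

lemma T_bounded_below_on_orthogonal:
  assumes E: "finite E" "E \<subseteq> null_T" "null_T \<subseteq> dspan E"
  obtains \<delta> where "\<delta> > 0" "\<And>x. in_D x \<Longrightarrow> (\<And>e. e \<in> E \<Longrightarrow> dinner e x = 0) \<Longrightarrow> \<delta> * dnorm2 x \<le> (norm (T x))\<^sup>2"
proof -
  define Z where "Z = {x. in_D x \<and> (\<forall>e\<in>E. dinner e x = 0)}"
  have "\<exists>\<delta>>0. \<forall>x\<in>Z. \<delta> * dnorm2 x \<le> (norm (T x))\<^sup>2"
  proof (rule ccontr)
  assume neg: "\<not> ?thesis"
  have "\<exists>x\<in>Z. (norm (T x))\<^sup>2 < 1 / real (Suc m) * dnorm2 x" for m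
  proof (rule ccontr)
    assume "\<not> ?thesis"
    hence "\<forall>x\<in>Z. 1 / real (Suc m) * dnorm2 x \<le> (norm (T x))\<^sup>2"
      by (simp add: not_less)
    moreover have "1 / real (Suc m) > 0"
      by simp
    ultimately show False
      using neg by blast
  qed
  then obtain X where X: "\<And>m. X m \<in> Z" "\<And>m. (norm (T (X m)))\<^sup>2 < 1 / real (Suc m) * dnorm2 (X m)"
    by metis
  \<comment> \<open>Normalising gives unit vectors \<open>Y m\<close> orthogonal to \<open>E\<close> with \<open>T (Y m) \<longrightarrow> 0\<close>.\<close>
  have pos: "dnorm2 (X m) > 0" for m
    using X(2)[of m] dnorm2_nonneg[of "X m"] by (cases "dnorm2 (X m) = 0") auto
  define Y where "Y m = (\<lambda>k. complex_of_real (1 / sqrt (dnorm2 (X m))) *\<^sub>C X m k)" for m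
  have Y: "in_D (Y m)" "dnorm2 (Y m) = 1" "\<And>e. e \<in> E \<Longrightarrow> dinner e (Y m) = 0"
    "(norm (T (Y m)))\<^sup>2 = (norm (T (X m)))\<^sup>2 / dnorm2 (X m)" for m
    using normalize_in_D[of "X m", OF _ pos[of m], folded Y_def] X(1)[of m] by (simp_all add: Z_def)
  have "(norm (T (Y m)))\<^sup>2 < 1 / real (Suc m)" for m
    using X(2)[of m] pos[of m] by (simp add: Y(4) divide_less_eq)
  hence "(\<lambda>m. norm (T (Y m))) \<longlonglongrightarrow> 0"
    using LIMSEQ_inverse_real_of_nat
    by (intro tendsto_norm_zero_if_power2_bounded[where h = "\<lambda>m. 1 / real (Suc m)"] less_imp_le)
      (simp_all add: inverse_eq_divide)
  hence T0: "(\<lambda>m. T (Y m)) \<longlonglongrightarrow> 0"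
    by (rule tendsto_norm_zero_cancel)
  hence "convergent (\<lambda>m. T (Y m))"
    by (auto simp: convergent_def)
  then obtain r where r: "strict_mono r" "\<And>k. k \<in> I \<Longrightarrow> Cauchy (\<lambda>m. Y (r m) k)"
    using Cauchy_subseq_if_T_convergent[of Y, OF Y(1)] Y(2) by (metis order_refl)
  obtain L where L: "in_D L" "\<And>k. k \<in> I \<Longrightarrow> (\<lambda>m. Y (r m) k) \<longlonglongrightarrow> L k"
    using Cauchy_components_converge[of "\<lambda>m. Y (r m)", OF r(2) Y(1)] by blast
  have "(\<lambda>m. T (Y (r m))) \<longlonglongrightarrow> T L"
    using T_tendsto[of "\<lambda>m. Y (r m)", OF Y(1) L] .
  moreover have "(\<lambda>m. T (Y (r m))) \<longlonglongrightarrow> 0"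
    using LIMSEQ_subseq_LIMSEQ[OF T0 r(1)] by (simp add: o_def)
  ultimately have "T L = 0"
    by (rule LIMSEQ_unique)
  hence "L \<in> dspan E"
    using L(1) E(3) by (auto simp: null_T_def)
  moreover have "dinner e L = 0" if "e \<in> E" for e
    using dinner_tendsto[of "\<lambda>m. Y (r m)" L e, OF L(2)] Y(3)[OF that] by (simp add: LIMSEQ_const_iff)
  moreover have "dnorm2 L = 1"
    using dnorm2_tendsto[of "\<lambda>m. Y (r m)", OF L(2)] Y(2) by (simp add: LIMSEQ_const_iff)
  ultimately show False
    using dspan_dinner_zero[of L E] by (simp add: dinner_self)
  qed
  thus thesis
    using that by (auto simp: Z_def)
qed
lemma Cauchy_components_if_T_convergent:
  fixes Z :: "nat \<Rightarrow> 'i \<Rightarrow> 'a"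
  assumes \<delta>: "\<delta> > 0" "\<And>x. in_D x \<Longrightarrow> (\<And>e. e \<in> E \<Longrightarrow> dinner e x = 0) \<Longrightarrow> \<delta> * dnorm2 x \<le> (norm (T x))\<^sup>2"
    and Z: "\<And>m. in_D (Z m)" "\<And>m e. e \<in> E \<Longrightarrow> dinner e (Z m) = 0" and TZ: "convergent (\<lambda>m. T (Z m))"
    and k: "k \<in> I"
  shows "Cauchy (\<lambda>m. Z m k)"
proof (rule Cauchy_if_diff_tendsto_prod)
  define h where "h mp = (norm (T (Z (fst mp)) - T (Z (snd mp))))\<^sup>2 / \<delta>" for mp :: "nat \<times> nat"
  have "((\<lambda>mp. T (Z (fst mp)) - T (Z (snd mp))) \<longlongrightarrow> 0) (sequentially \<times>\<^sub>F sequentially)"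
    by (rule convergent_diff_tendsto_prod[OF TZ])
  hence "((\<lambda>mp. (norm (T (Z (fst mp)) - T (Z (snd mp))))\<^sup>2) \<longlongrightarrow> 0) (sequentially \<times>\<^sub>F sequentially)"
    using tendsto_power[OF tendsto_norm, of _ 0 _ 2] by simp
  hence "(h \<longlongrightarrow> 0) (sequentially \<times>\<^sub>F sequentially)"
    unfolding h_def by (rule tendsto_divide_zero)
  moreover have "(norm (Z (fst mp) k - Z (snd mp) k))\<^sup>2 \<le> h mp" for mp
  proof -
    define d where "d = (\<lambda>k. Z (fst mp) k - Z (snd mp) k)"
    have "\<delta> * dnorm2 d \<le> (norm (T (Z (fst mp)) - T (Z (snd mp))))\<^sup>2"
      using \<delta>(2)[of d] in_D_diff[OF Z(1) Z(1)] T_diff[OF Z(1) Z(1)] Z(2) by (simp add: d_def dinner_diff_right)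
    hence "dnorm2 d \<le> h mp"
      using \<delta>(1) by (simp add: h_def pos_le_divide_eq mult.commute)
    thus ?thesis
      using power2_norm_le_dnorm2[OF k, of d] by (simp add: d_def)
  qed
  ultimately show "((\<lambda>mp. norm (Z (fst mp) k - Z (snd mp) k)) \<longlongrightarrow> 0) (sequentially \<times>\<^sub>F sequentially)"
    by (rule tendsto_norm_zero_if_power2_bounded[rotated])
qed

lemma closed_range: "closed {(\<Sum>k\<in>I. A k (x k)) | x. \<forall>k\<in>I. x k \<in> D k}"
  unfolding closed_sequential_limits
proof (intro allI impI, elim conjE)
  fix ys y
  assume ys: "\<forall>m. ys m \<in> {(\<Sum>k\<in>I. A k (x k)) | x. \<forall>k\<in>I. x k \<in> D k}" and y: "ys \<longlonglongrightarrow> y"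
  have "\<exists>x. in_D x \<and> T x = ys m" for m
  proof -
    obtain x where "ys m = (\<Sum>k\<in>I. A k (x k))" "\<forall>k\<in>I. x k \<in> D k"
      using ys by blast
    thus ?thesis
      unfolding in_D_def T_def by auto
  qed
  then obtain W where W: "\<And>m. in_D (W m)" "\<And>m. T (W m) = ys m"
    by metis
  obtain E where E: "finite E" "orthonormal E" "E \<subseteq> null_T" "null_T \<subseteq> dspan E"
    by (rule null_T_finite_basis)
  obtain \<delta> where \<delta>: "\<delta> > 0" "\<And>x. in_D x \<Longrightarrow> (\<And>e. e \<in> E \<Longrightarrow> dinner e x = 0) \<Longrightarrow> \<delta> * dnorm2 x \<le> (norm (T x))\<^sup>2"
    using T_bounded_below_on_orthogonal[OF E(1,3,4)] by blast
  \<comment> \<open>Removing the kernel components makes the preimages Cauchy.\<close>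
  define Z where "Z m = residual E (W m)" for m
  have ED: "\<And>e. e \<in> E \<Longrightarrow> in_D e"
    using E(3) by (auto simp: null_T_def)
  have Z1: "in_D (Z m)" for m
    unfolding Z_def by (rule residual_in_D[OF ED W(1)])
  have Z2: "dinner e (Z m) = 0" if "e \<in> E" for m e
    unfolding Z_def by (rule dinner_residual[OF E(1,2) that])
  have Z3: "T (Z m) = ys m" for m
    unfolding Z_def using T_residual[OF E(3) W(1)] W(2) by simp
  have "convergent (\<lambda>m. T (Z m))"
    unfolding Z3 using y by (auto simp: convergent_def)
  hence "\<And>k. k \<in> I \<Longrightarrow> Cauchy (\<lambda>m. Z m k)"
    using Cauchy_components_if_T_convergent[where Z = Z, OF \<delta> Z1 Z2] by blast
  then obtain L where L: "in_D L" "\<And>k. k \<in> I \<Longrightarrow> (\<lambda>m. Z m k) \<longlonglongrightarrow> L k"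
    using Cauchy_components_converge[of Z, OF _ Z1] by blast
  have "ys \<longlonglongrightarrow> T L"
    using T_tendsto[of Z, OF Z1 L] Z3 by simp
  hence "y = T L"
    using y LIMSEQ_unique by blast
  thus "y \<in> {(\<Sum>k\<in>I. A k (x k)) | x. \<forall>k\<in>I. x k \<in> D k}"
    using L(1) unfolding in_D_def T_def by (intro CollectI exI[of _ L]) simp
qed

lemma finite_dim_component_image:
  assumes i: "i \<in> I"
  shows "finite_dim {A i (x i) | x. (\<forall>k\<in>I. x k \<in> D k) \<and> (\<Sum>k\<in>I. A k (x k)) = 0}"
proof -
  obtain E where E: "finite E" "orthonormal E" "E \<subseteq> null_T" "null_T \<subseteq> dspan E"
    by (rule null_T_finite_basis)
  have "A i (x i) \<in> cspan_fin ((\<lambda>e. A i (e i)) ` E)" if x: "x \<in> null_T" for x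
  proof -
    obtain a where a: "x i = (\<Sum>e\<in>E. a e *\<^sub>C e i)"
      using E(4) x i by (auto simp: dspan_def)
    have eD: "e i \<in> D i" if "e \<in> E" for e
      using E(3) that i by (auto simp: null_T_def in_D_def)
    have "A i (x i) = (\<Sum>e\<in>E. A i (a e *\<^sub>C e i))"
      unfolding a using eD csubspace_scaleC[OF csubspace_D[OF i]]
      by (intro bounded_clinear_on_sum[OF bounded_A[OF i] csubspace_D[OF i]]) blast
    also have "\<dots> = (\<Sum>e\<in>E. a e *\<^sub>C A i (e i))"
      using eD by (intro sum.cong refl bounded_clinear_on_scaleC[OF bounded_A[OF i]])
    finally show ?thesis
      using E(1) by (simp add: cspan_fin_sum cspan_fin_superset)
  qed
  hence "{A i (x i) | x. (\<forall>k\<in>I. x k \<in> D k) \<and> (\<Sum>k\<in>I. A k (x k)) = 0} \<subseteq> cspan_fin ((\<lambda>e. A i (e i)) ` E)"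
    by (auto simp: null_T_def in_D_def T_def)
  thus ?thesis
    using E(1) unfolding finite_dim_def by blast
qed

end

lemma lower_bound_from_entrywise:
  fixes x :: "'i \<Rightarrow> 'a::complex_inner" and A :: "'i \<Rightarrow> 'a \<Rightarrow> 'b::complex_inner"
    and K :: "'i \<Rightarrow> 'i \<Rightarrow> 'a \<Rightarrow> 'a" and Q :: "'i \<Rightarrow> 'i \<Rightarrow> real" and \<eta> :: real
  assumes fin: "finite I"
    and coer: "\<And>v. c * (\<Sum>i\<in>I. (v i)\<^sup>2) \<le> (\<Sum>i\<in>I. \<Sum>j\<in>I. v i * Q i j * v j)"
    and \<eta>: "\<eta> \<ge> 0" "\<eta> * real (card I) \<le> c / 2"
    and entry: "\<And>i j. i \<in> I \<Longrightarrow> j \<in> I \<Longrightarrow>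
      (Q i j - \<eta>) * norm (x i) * norm (x j) - Re (cinner (x i) (K i j (x j))) \<le> Re (cinner (A i (x i)) (A j (x j)))"
  shows "c / 2 * (\<Sum>k\<in>I. (norm (x k))\<^sup>2) \<le>
    (norm (\<Sum>k\<in>I. A k (x k)))\<^sup>2 + (\<Sum>i\<in>I. \<Sum>j\<in>I. Re (cinner (x i) (K i j (x j))))"
proof -
  have "c / 2 * (\<Sum>k\<in>I. (norm (x k))\<^sup>2) \<le> (\<Sum>i\<in>I. \<Sum>j\<in>I. (Q i j - \<eta>) * norm (x i) * norm (x j))"
    by (rule quadratic_form_perturbation[OF fin coer \<eta>])
  also have "\<dots> \<le> (\<Sum>i\<in>I. \<Sum>j\<in>I. Re (cinner (A i (x i)) (A j (x j))) + Re (cinner (x i) (K i j (x j))))"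
    using entry by (intro sum_mono) (simp add: algebra_simps)
  also have "\<dots> = (norm (\<Sum>k\<in>I. A k (x k)))\<^sup>2 + (\<Sum>i\<in>I. \<Sum>j\<in>I. Re (cinner (x i) (K i j (x j))))"
    by (simp add: power2_norm_sum sum.distrib)
  finally show ?thesis .
qed

lemma compact_correction_exists:
  fixes X :: "'i \<Rightarrow> 'a::chilbert_space set" and A :: "'i \<Rightarrow> 'a \<Rightarrow> 'b::chilbert_space"
  defines "D \<equiv> \<lambda>k. orth_diff (X k) (ker_on (X k) (A k))"
  assumes X: "closed_csubspace (X i)" "closed_csubspace (X j)"
    and A: "bounded_clinear_on (X i) UNIV (A i)" "bounded_clinear_on (X j) UNIV (A j)"
    and \<gamma>: "\<gamma> i > 0" "ereal (\<gamma> i) \<le> ess_red_min_mod (X i) (A i)"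
    and \<epsilon>: "i \<noteq> j \<Longrightarrow> ess_norm (X j) (X i) (\<lambda>x. adj_on (X i) (A i) (A j x)) \<le> \<epsilon> i j"
    and \<eta>: "\<eta> > 0"
  obtains K where "compact_op_on (D j) UNIV K"
    "\<And>x. x i \<in> D i \<Longrightarrow> x j \<in> D j \<Longrightarrow>
      ((if i = j then (\<gamma> i)\<^sup>2 else - \<epsilon> i j) - \<eta>) * norm (x i) * norm (x j) - Re (cinner (x i) (K (x j)))
        \<le> Re (cinner (A i (x i)) (A j (x j)))"
proof (cases "i = j")
  case True
  obtain K where K: "compact_op_on (D i) UNIV K"
    "\<And>x. x \<in> D i \<Longrightarrow> ((\<gamma> i)\<^sup>2 - \<eta>) * (norm x)\<^sup>2 - Re (cinner x (K x)) \<le> (norm (A i x))\<^sup>2"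
    using ess_red_min_mod_lower_bound[OF X(1) A(1) \<gamma> \<eta>] unfolding D_def by blast
  show thesis
  proof (rule that)
    show "compact_op_on (D j) UNIV K"
      using K(1) True by simp
    fix x
    assume "x i \<in> D i"
    thus "((if i = j then (\<gamma> i)\<^sup>2 else - \<epsilon> i j) - \<eta>) * norm (x i) * norm (x j) - Re (cinner (x i) (K (x j)))
        \<le> Re (cinner (A i (x i)) (A j (x j)))"
      using K(2)[of "x i"] True by (simp add: power2_norm_eq_cinner[symmetric] power2_eq_square mult.assoc)
  qed
next
  case False
  obtain K where K: "compact_op_on (X j) (X i) K"
    "\<And>x y. x \<in> X i \<Longrightarrow> y \<in> X j \<Longrightarrow>
      - (\<epsilon> i j + \<eta>) * norm x * norm y - Re (cinner x (K y)) \<le> Re (cinner (A i x) (A j y))"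
    using ess_norm_adj_lower_bound[OF X A \<epsilon>[OF False] \<eta>] by blast
  show thesis
  proof (rule that)
    show "compact_op_on (D j) UNIV K"
      unfolding D_def by (rule compact_op_on_subset[OF K(1) orth_diff_subset])
  qed (use False K(2) orth_diff_subset in \<open>force simp: D_def\<close>)
qed

lemma coercive_mod_compact_from_essential_bounds:
  fixes X :: "'i \<Rightarrow> 'a::chilbert_space set" and A :: "'i \<Rightarrow> 'a \<Rightarrow> 'b::chilbert_space"
    and \<gamma> :: "'i \<Rightarrow> real" and \<epsilon> :: "'i \<Rightarrow> 'i \<Rightarrow> real"
  assumes fin: "finite I"
    and X: "\<And>k. k \<in> I \<Longrightarrow> closed_csubspace (X k)"
    and A: "\<And>k. k \<in> I \<Longrightarrow> bounded_clinear_on (X k) UNIV (A k)"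
    and \<gamma>: "\<And>k. k \<in> I \<Longrightarrow> \<gamma> k > 0" "\<And>k. k \<in> I \<Longrightarrow> ereal (\<gamma> k) \<le> ess_red_min_mod (X k) (A k)"
    and \<epsilon>: "\<And>i j. i \<in> I \<Longrightarrow> j \<in> I \<Longrightarrow> i \<noteq> j \<Longrightarrow>
      ess_norm (X j) (X i) (\<lambda>x. adj_on (X i) (A i) (A j x)) \<le> \<epsilon> i j"
    and c: "c > 0" "\<And>v. c * (\<Sum>i\<in>I. (v i)\<^sup>2) \<le>
      (\<Sum>i\<in>I. \<Sum>j\<in>I. v i * (if i = j then (\<gamma> i)\<^sup>2 else - \<epsilon> i j) * v j)"
  shows "\<exists>K. coercive_mod_compact I (\<lambda>k. orth_diff (X k) (ker_on (X k) (A k))) A K (c / 2)"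
proof -
  define D where "D k = orth_diff (X k) (ker_on (X k) (A k))" for k
  define \<eta> where "\<eta> = c / (2 * (real (card I) + 1))"
  have \<eta>: "\<eta> > 0" "\<eta> * real (card I) \<le> c / 2"
    using c(1) by (simp_all add: \<eta>_def field_simps)
  define good where "good i j K \<longleftrightarrow> compact_op_on (D j) UNIV K \<and>
      (\<forall>x. x i \<in> D i \<longrightarrow> x j \<in> D j \<longrightarrow>
        ((if i = j then (\<gamma> i)\<^sup>2 else - \<epsilon> i j) - \<eta>) * norm (x i) * norm (x j) - Re (cinner (x i) (K (x j)))
          \<le> Re (cinner (A i (x i)) (A j (x j))))" for i j K
  have "\<exists>K. good i j K" if i: "i \<in> I" and j: "j \<in> I" for i j
  proof -
    obtain K where "compact_op_on (D j) UNIV K"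
      "\<And>x. x i \<in> D i \<Longrightarrow> x j \<in> D j \<Longrightarrow>
        ((if i = j then (\<gamma> i)\<^sup>2 else - \<epsilon> i j) - \<eta>) * norm (x i) * norm (x j) - Re (cinner (x i) (K (x j)))
          \<le> Re (cinner (A i (x i)) (A j (x j)))"
      using compact_correction_exists[where X = X and A = A and \<gamma> = \<gamma> and \<epsilon> = \<epsilon> and i = i and j = j,
          OF X[OF i] X[OF j] A[OF i] A[OF j] \<gamma>(1)[OF i] \<gamma>(2)[OF i] \<epsilon>[OF i j] \<eta>(1)]
      unfolding D_def by blast
    thus ?thesis
      unfolding good_def by blast
  qed
  hence "\<forall>p\<in>I \<times> I. \<exists>K. good (fst p) (snd p) K"
    by (simp add: mem_Times_iff)
  then obtain K' where "\<forall>p\<in>I \<times> I. good (fst p) (snd p) (K' p)"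
    by (rule bchoice[THEN exE])
  hence good: "good i j (K' (i, j))" if "i \<in> I" "j \<in> I" for i j
    using that by simp
  hence K': "\<And>i j. i \<in> I \<Longrightarrow> j \<in> I \<Longrightarrow> compact_op_on (D j) UNIV (K' (i, j))"
    "\<And>i j x. i \<in> I \<Longrightarrow> j \<in> I \<Longrightarrow> x i \<in> D i \<Longrightarrow> x j \<in> D j \<Longrightarrow>
      ((if i = j then (\<gamma> i)\<^sup>2 else - \<epsilon> i j) - \<eta>) * norm (x i) * norm (x j) - Re (cinner (x i) (K' (i, j) (x j)))
        \<le> Re (cinner (A i (x i)) (A j (x j)))"
    unfolding good_def by blast+
  have "coercive_mod_compact I D A (\<lambda>i j. K' (i, j)) (c / 2)"
  proof
    show "\<And>k. k \<in> I \<Longrightarrow> closed_csubspace (D k)"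
      unfolding D_def using X by (rule closed_csubspace_orth_diff)
    show "\<And>k. k \<in> I \<Longrightarrow> bounded_clinear_on (D k) UNIV (A k)"
      unfolding D_def using A orth_diff_subset by (rule bounded_clinear_on_subset)
    show "\<And>x. (\<And>k. k \<in> I \<Longrightarrow> x k \<in> D k) \<Longrightarrow> c / 2 * (\<Sum>k\<in>I. (norm (x k))\<^sup>2) \<le>
        (norm (\<Sum>k\<in>I. A k (x k)))\<^sup>2 + (\<Sum>i\<in>I. \<Sum>j\<in>I. Re (cinner (x i) (K' (i, j) (x j))))"
      using lower_bound_from_entrywise[where A = A and K = "\<lambda>i j. K' (i, j)", OF fin c(2) less_imp_le[OF \<eta>(1)] \<eta>(2)]
        K'(2) by blast
  qed (use fin c(1) K'(1) in simp_all)
  thus ?thesis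
    unfolding D_def by blast
qed

lemma orth_diff_ker_on_preimages:
  fixes X :: "'i \<Rightarrow> 'a::chilbert_space set" and A :: "'i \<Rightarrow> 'a \<Rightarrow> 'b::complex_inner"
  assumes X: "\<And>k. k \<in> I \<Longrightarrow> closed_csubspace (X k)" and A: "\<And>k. k \<in> I \<Longrightarrow> bounded_clinear_on (X k) UNIV (A k)"
    and x: "\<And>k. k \<in> I \<Longrightarrow> x k \<in> X k"
  obtains d where "\<forall>k\<in>I. d k \<in> orth_diff (X k) (ker_on (X k) (A k)) \<and> A k (d k) = A k (x k)"
proof -
  have "\<forall>k\<in>I. \<exists>d. d \<in> orth_diff (X k) (ker_on (X k) (A k)) \<and> A k d = A k (x k)"
    using orth_diff_ker_on_image[OF X A x] by metis
  then obtain d where "\<forall>k\<in>I. d k \<in> orth_diff (X k) (ker_on (X k) (A k)) \<and> A k (d k) = A k (x k)"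
    by (rule bchoice[THEN exE])
  thus thesis
    by (rule that)
qed

lemma range_sum_orth_diff_ker_on:
  fixes X :: "'i \<Rightarrow> 'a::chilbert_space set" and A :: "'i \<Rightarrow> 'a \<Rightarrow> 'b::complex_inner"
  assumes X: "\<And>k. k \<in> I \<Longrightarrow> closed_csubspace (X k)" and A: "\<And>k. k \<in> I \<Longrightarrow> bounded_clinear_on (X k) UNIV (A k)"
  shows "{(\<Sum>k\<in>I. A k (x k)) | x. \<forall>k\<in>I. x k \<in> X k} =
    {(\<Sum>k\<in>I. A k (x k)) | x. \<forall>k\<in>I. x k \<in> orth_diff (X k) (ker_on (X k) (A k))}"
proof (intro equalityI subsetI)
  fix v
  assume "v \<in> {(\<Sum>k\<in>I. A k (x k)) | x. \<forall>k\<in>I. x k \<in> X k}"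
  then obtain x where x: "v = (\<Sum>k\<in>I. A k (x k))" "\<And>k. k \<in> I \<Longrightarrow> x k \<in> X k"
    by blast
  obtain d where "\<forall>k\<in>I. d k \<in> orth_diff (X k) (ker_on (X k) (A k)) \<and> A k (d k) = A k (x k)"
    by (rule orth_diff_ker_on_preimages[OF X A x(2)])
  hence d: "\<And>k. k \<in> I \<Longrightarrow> d k \<in> orth_diff (X k) (ker_on (X k) (A k))"
    "\<And>k. k \<in> I \<Longrightarrow> A k (d k) = A k (x k)"
    by auto
  have "v = (\<Sum>k\<in>I. A k (d k))"
    unfolding x(1) using d(2) by simp
  thus "v \<in> {(\<Sum>k\<in>I. A k (x k)) | x. \<forall>k\<in>I. x k \<in> orth_diff (X k) (ker_on (X k) (A k))}"
    using d(1) by blast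
next
  fix v
  assume "v \<in> {(\<Sum>k\<in>I. A k (x k)) | x. \<forall>k\<in>I. x k \<in> orth_diff (X k) (ker_on (X k) (A k))}"
  then obtain x where "v = (\<Sum>k\<in>I. A k (x k))" "\<forall>k\<in>I. x k \<in> orth_diff (X k) (ker_on (X k) (A k))"
    by blast
  moreover have "\<forall>k\<in>I. x k \<in> X k"
    using calculation(2) orth_diff_subset by blast
  ultimately show "v \<in> {(\<Sum>k\<in>I. A k (x k)) | x. \<forall>k\<in>I. x k \<in> X k}"
    by blast
qed

lemma range_inter_subset_kernel_components:
  fixes X :: "'i \<Rightarrow> 'a::chilbert_space set" and A :: "'i \<Rightarrow> 'a \<Rightarrow> 'b::complex_inner"
  assumes X: "\<And>k. k \<in> I \<Longrightarrow> closed_csubspace (X k)" and A: "\<And>k. k \<in> I \<Longrightarrow> bounded_clinear_on (X k) UNIV (A k)"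
    and fin: "finite I" and i: "i \<in> I"
  shows "A i ` X i \<inter> {(\<Sum>j\<in>I - {i}. y j) | y. \<forall>j\<in>I - {i}. y j \<in> A j ` X j} \<subseteq>
    {A i (x i) | x. (\<forall>k\<in>I. x k \<in> orth_diff (X k) (ker_on (X k) (A k))) \<and> (\<Sum>k\<in>I. A k (x k)) = 0}"
proof
  fix v
  assume v: "v \<in> A i ` X i \<inter> {(\<Sum>j\<in>I - {i}. y j) | y. \<forall>j\<in>I - {i}. y j \<in> A j ` X j}"
  then obtain u where u: "u \<in> X i" "v = A i u"
    by blast
  obtain y where y: "v = (\<Sum>j\<in>I - {i}. y j)" "\<forall>j\<in>I - {i}. y j \<in> A j ` X j"
    using v by blast
  hence "\<forall>j\<in>I - {i}. \<exists>u. u \<in> X j \<and> y j = A j u"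
    by blast
  then obtain w where "\<forall>j\<in>I - {i}. w j \<in> X j \<and> y j = A j (w j)"
    by (rule bchoice[THEN exE])
  hence w: "\<And>j. j \<in> I - {i} \<Longrightarrow> w j \<in> X j \<and> y j = A j (w j)"
    by blast
  \<comment> \<open>\<open>v\<close> minus the decomposition of \<open>v\<close> over the other ranges is a zero sum.\<close>
  define x where "x k = (if k = i then u else - w k)" for k
  have x: "x k \<in> X k" if "k \<in> I" for k
    using that u(1) w csubspace_minus[OF closed_csubspace_csubspace[OF X[OF that]]] by (simp add: x_def)
  obtain d where "\<forall>k\<in>I. d k \<in> orth_diff (X k) (ker_on (X k) (A k)) \<and> A k (d k) = A k (x k)"
    by (rule orth_diff_ker_on_preimages[OF X A x])
  hence d: "\<And>k. k \<in> I \<Longrightarrow> d k \<in> orth_diff (X k) (ker_on (X k) (A k))"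
    "\<And>k. k \<in> I \<Longrightarrow> A k (d k) = A k (x k)"
    by auto
  have "(\<Sum>k\<in>I - {i}. A k (d k)) = - v"
    unfolding y(1) using d(2) w bounded_clinear_on_minus[OF A] by (simp add: x_def sum_negf)
  hence "(\<Sum>k\<in>I. A k (d k)) = 0"
    using d(2)[OF i] u(2) fin i by (simp add: sum.remove x_def)
  moreover have "v = A i (d i)"
    using d(2)[OF i] u(2) by (simp add: x_def)
  ultimately show "v \<in> {A i (x i) | x. (\<forall>k\<in>I. x k \<in> orth_diff (X k) (ker_on (X k) (A k))) \<and> (\<Sum>k\<in>I. A k (x k)) = 0}"
    using d(1) by blast
qed

theorem mainTheorem1:
  fixes n :: nat
    and Hs :: "nat \<Rightarrow> 'a::chilbert_space set"
    and A :: "nat \<Rightarrow> 'a \<Rightarrow> 'b::chilbert_space"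
    and \<gamma> :: "nat \<Rightarrow> real"
    and \<epsilon> :: "nat \<Rightarrow> nat \<Rightarrow> real"
  assumes n_ge: "n \<ge> 1"
    and Hs: "\<forall>k\<in>{1..n}. closed_csubspace (Hs k)"
    and A_bdd: "\<forall>k\<in>{1..n}. bounded_clinear_on (Hs k) UNIV (A k)"
    and A_closed_ran: "\<forall>k\<in>{1..n}. closed (A k ` Hs k)"
    and \<gamma>_pos: "\<forall>k\<in>{1..n}. \<gamma> k > 0"
    and \<epsilon>_sym: "\<forall>i\<in>{1..n}. \<forall>j\<in>{1..n}. i \<noteq> j \<longrightarrow> \<epsilon> i j = \<epsilon> j i"
    and cond1: "\<forall>k\<in>{1..n}. ess_red_min_mod (Hs k) (A k) \<ge> ereal (\<gamma> k)"
    and cond2: "\<forall>i\<in>{1..n}. \<forall>j\<in>{1..n}. i \<noteq> j \<longrightarrow>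
                  ess_norm (Hs j) (Hs i) (\<lambda>x. adj_on (Hs i) (A i) (A j x)) \<le> \<epsilon> i j"
    and posdef: "pos_def_mat n (\<lambda>i j. if i = j then (\<gamma> i)\<^sup>2 else - \<epsilon> i j)"
  shows "ess_lin_indep n (\<lambda>k. A k ` Hs k)
         \<and> closed {(\<Sum>k\<in>{1..n}. A k (x k)) | x. \<forall>k\<in>{1..n}. x k \<in> Hs k}"
proof -
  define I :: "nat set" where "I = {1..n}"
  define D where "D k = orth_diff (Hs k) (ker_on (Hs k) (A k))" for k
  have X: "\<And>k. k \<in> I \<Longrightarrow> closed_csubspace (Hs k)" and A: "\<And>k. k \<in> I \<Longrightarrow> bounded_clinear_on (Hs k) UNIV (A k)"
    using Hs A_bdd by (simp_all add: I_def)
  have "\<forall>v. (\<exists>i\<in>I. v i \<noteq> 0) \<longrightarrow> (\<Sum>i\<in>I. \<Sum>j\<in>I. v i * (if i = j then (\<gamma> i)\<^sup>2 else - \<epsilon> i j) * v j) > 0"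
    using posdef unfolding pos_def_mat_def I_def by (rule conjunct2)
  from pos_def_coercive[OF _ this[rule_format]] obtain c where c: "c > 0"
    "\<forall>v. c * (\<Sum>i\<in>I. (v i)\<^sup>2) \<le> (\<Sum>i\<in>I. \<Sum>j\<in>I. v i * (if i = j then (\<gamma> i)\<^sup>2 else - \<epsilon> i j) * v j)"
    by (auto simp: I_def)
  have "\<exists>K. coercive_mod_compact I D A K (c / 2)"
    unfolding D_def
    by (rule coercive_mod_compact_from_essential_bounds[OF _ X A _ _ _ c(1) c(2)[rule_format]])
      (use \<gamma>_pos cond1 cond2 in \<open>simp_all add: I_def\<close>)
  then obtain K where "coercive_mod_compact I D A K (c / 2)"
    by blast
  then interpret coercive_mod_compact I D A K "c / 2" .
  have "finite_dim (A i ` Hs i \<inter> {(\<Sum>j\<in>I - {i}. y j) | y. \<forall>j\<in>I - {i}. y j \<in> A j ` Hs j})"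
    if "i \<in> I" for i
    using finite_dim_subset[OF finite_dim_component_image[OF that]]
      range_inter_subset_kernel_components[OF X A finite_I that] unfolding D_def .
  moreover have "closed {(\<Sum>k\<in>I. A k (x k)) | x. \<forall>k\<in>I. x k \<in> Hs k}"
    using closed_range unfolding D_def by (simp only: range_sum_orth_diff_ker_on[OF X A])
  ultimately show ?thesis
    unfolding ess_lin_indep_def I_def by blast
qed

end
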